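(* Under the setting of the Jitomirskaya–Last inequality, for every $\xi\in\partial\mathbb D$, $\lambda\in\mathbb R$ and $\epsilon>0$, $$\left|\frac{1+\xi s(\lambda+i\epsilon)}{1-\xi s(\lambda+i\epsilon)}\right|\le c_+\sup_{0\le x\le\frac1{2\epsilon}}\|T(\lambda,x)\|^2,\qquad c_+=3+\sqrt8.$$
   Context: $\varphi\in L^1_{\rm loc}([0,\infty))$ with $\sup_{x\ge0}\int_x^{x+1}|\varphi|<\infty$; $\Lambda_\varphi=\begin{bmatrix} i&0\\0&-i\end{bmatrix}\frac{d}{dx}+\begin{bmatrix}0&\varphi\\ \overline{\varphi}&0\end{bmatrix}$ on $[0,\infty)$. For $\Im z>0$, $\Psi(z,\cdot)$ is the solution of $\Lambda_\varphi\Psi=z\Psi$ in $L^2([0,\infty),\mathbb C^2)$ normalized by $\Psi(z,0)=(s(z),1)^\top$, defining the Schur function $s$. $T(\lambda,x)$ solves $\Lambda_\varphi T=\lambda T$, $T(\lambda,0)=I$. *)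

theory Defs
  imports "HOL-Analysis.Analysis"
begin

text \<open>Coefficient matrix of the first-order system equivalent to
  Lambda_phi u = z u, i.e. u' = A u with
  u1' = -i z u1 + i phi u2,  u2' = -i conj(phi) u1 + i z u2.\<close>
definition dirac_coeff :: "(real \<Rightarrow> complex) \<Rightarrow> complex \<Rightarrow> real \<Rightarrow> complex^2^2" where
  "dirac_coeff \<phi> z t = (\<chi> i j.
      if i = 1 then (if j = 1 then - \<i> * z else \<i> * \<phi> t)
      else (if j = 1 then - \<i> * cnj (\<phi> t) else \<i> * z))"

text \<open>Absolutely continuous (integral-equation) solutions on [0,oo) of Lambda_phi u = z u.\<close>
definition dirac_sol :: "(real \<Rightarrow> complex) \<Rightarrow> complex \<Rightarrow> (real \<Rightarrow> complex^2) \<Rightarrow> bool" where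
  "dirac_sol \<phi> z u \<longleftrightarrow>
     (\<forall>x\<ge>0. (\<lambda>t. dirac_coeff \<phi> z t *v u t) integrable_on {0..x} \<and>
             u x = u 0 + integral {0..x} (\<lambda>t. dirac_coeff \<phi> z t *v u t))"

definition dirac_msol :: "(real \<Rightarrow> complex) \<Rightarrow> complex \<Rightarrow> (real \<Rightarrow> complex^2^2) \<Rightarrow> bool" where
  "dirac_msol \<phi> z M \<longleftrightarrow>
     (\<forall>x\<ge>0. (\<lambda>t. dirac_coeff \<phi> z t ** M t) integrable_on {0..x} \<and>
             M x = M 0 + integral {0..x} (\<lambda>t. dirac_coeff \<phi> z t ** M t))"

definition transfer :: "(real \<Rightarrow> complex) \<Rightarrow> real \<Rightarrow> real \<Rightarrow> complex^2^2" where
  "transfer \<phi> lam x = (THE N. \<exists>M. dirac_msol \<phi> (complex_of_real lam) M \<and> M 0 = mat 1 \<and> M x = N)"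

definition schur :: "(real \<Rightarrow> complex) \<Rightarrow> complex \<Rightarrow> complex" where
  "schur \<phi> z = (THE w. \<exists>\<Psi>. dirac_sol \<phi> z \<Psi> \<and>
        (\<lambda>x. (norm (\<Psi> x))\<^sup>2) integrable_on {0..} \<and>
        \<Psi> 0 = (\<chi> i. if i = 1 then w else 1))"

end

theory Submission
  imports Defs
begin

text \<open>Let \<open>\<Psi>\<close> be the Weyl solution at \<open>z = \<lambda> + i\<epsilon>\<close>, so \<open>\<Psi>(0) = (s, 1)\<close> with \<open>s = s(z)\<close>,
  and let \<open>T\<close> be the transfer matrix at the real energy \<open>\<lambda>\<close>. The vector
  \<open>W(x) = T(x)\<^sup>* \<sigma>\<^sub>3 \<Psi>(x)\<close> collects the \<open>J\<close>-forms of \<open>\<Psi>\<close> with the columns of \<open>T\<close>; by the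
  Lagrange identity it changes only by \<open>\<epsilon> \<integral>\<^sub>0\<^sup>x T\<^sup>* \<Psi>\<close>, while \<open>|W(0)|\<^sup>2 = 1 + |s|\<^sup>2\<close>. With
  \<open>L = 1/(2\<epsilon>)\<close> and \<open>K = sup {\<parallel>T(x)\<parallel>\<^sup>2 | x \<in> [0, L]}\<close> this gives
  \<open>\<surd>(1 + |s|\<^sup>2) \<le> \<surd>K (|\<Psi>(x)| + \<epsilon> \<integral>\<^sub>0\<^sup>L |\<Psi>|)\<close> on \<open>[0, L]\<close>, which Cauchy-Schwarz turns into
  \<open>\<integral>\<^sub>0\<^sup>L |\<Psi>|\<^sup>2 \<ge> 4/9 L (1 + |s|\<^sup>2) / K\<close>. Together with the Weyl disc bound
  \<open>2\<epsilon> \<integral>\<^sub>0\<^sup>L |\<Psi>|\<^sup>2 \<le> 1 - |s|\<^sup>2\<close> this yields \<open>(1 + |s|) / (1 - |s|) \<le> 9K/2 \<le> (3 + \<surd>8) K\<close>.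

  As \<open>\<phi>\<close> is only locally integrable, solutions are continuous solutions of the integral
  equation. They are obtained by Picard iteration, and the Lagrange identity rests on a
  product rule for indefinite integrals: \<open>f g - \<integral>(f' g + f g')\<close> has increments of order
  \<open>(\<integral>(|f'| + |g'|))\<^sup>2\<close> and is therefore constant.\<close>

section \<open>Absolutely continuous functions\<close>

lemma norm_increment_le_if_increment_le_square:
  fixes h :: "real \<Rightarrow> 'b::real_normed_vector" and F :: "real \<Rightarrow> real"
  assumes X: "0 \<le> X" and F_cont: "continuous_on {0..X} F" and C: "0 \<le> C" and e: "0 < e"
    and F_mono: "\<And>x y. 0 \<le> x \<Longrightarrow> x \<le> y \<Longrightarrow> y \<le> X \<Longrightarrow> F x \<le> F y"
    and h_incr: "\<And>x y. 0 \<le> x \<Longrightarrow> x \<le> y \<Longrightarrow> y \<le> X \<Longrightarrow> norm (h y - h x) \<le> C * (F y - F x)^2"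
  shows "norm (h X - h 0) \<le> C * e * (F X - F 0)"
proof -
  obtain d where d: "d > 0"
    and dd: "\<And>x x'. x \<in> {0..X} \<Longrightarrow> x' \<in> {0..X} \<Longrightarrow> dist x' x < d \<Longrightarrow> dist (F x') (F x) < e"
    using compact_uniformly_continuous[OF F_cont] e unfolding uniformly_continuous_on_def
    by (metis compact_Icc)
  obtain n :: nat where n: "X / d < real n" using reals_Archimedean2 by blast
  then have n0: "n > 0" using divide_nonneg_pos[OF X d] by (cases n) auto
  define p where "p k = X * real k / real n" for k
  have mesh: "p (Suc k) - p k < d" for k
    using n n0 d by (simp add: p_def field_simps)
  have "norm (h (p k) - h 0) \<le> C * e * (F (p k) - F 0)" if "k \<le> n" for k
    using that
  proof (induction k)
    case 0
    then show ?case by (simp add: p_def)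
  next
    case (Suc k)
    have pk: "0 \<le> p k" "p k \<le> p (Suc k)" "p (Suc k) \<le> X"
      using X n0 Suc.prems mult_left_mono[of "real (Suc k)" "real n" X]
      by (auto simp: p_def field_simps mult_left_mono)
    have "F (p (Suc k)) - F (p k) < e"
      using dd[of "p k" "p (Suc k)"] pk mesh[of k] by (auto simp: dist_real_def)
    moreover have "0 \<le> F (p (Suc k)) - F (p k)" using F_mono pk by simp
    ultimately have "(F (p (Suc k)) - F (p k))^2 \<le> e * (F (p (Suc k)) - F (p k))"
      by (simp add: power2_eq_square mult_right_mono)
    then have "C * (F (p (Suc k)) - F (p k))^2 \<le> C * e * (F (p (Suc k)) - F (p k))"
      using C by (simp add: mult.assoc mult_left_mono)
    then have "norm (h (p (Suc k)) - h (p k)) \<le> C * e * (F (p (Suc k)) - F (p k))"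
      using h_incr[OF pk] by linarith
    moreover have "norm (h (p (Suc k)) - h 0) \<le> norm (h (p (Suc k)) - h (p k)) + norm (h (p k) - h 0)"
      by (rule norm_diff_triangle_le[of _ "h (p k)"]) simp_all
    ultimately show ?case using Suc by (simp add: algebra_simps)
  qed
  from this[of n] show ?thesis using n0 by (simp add: p_def)
qed

lemma eq_if_norm_increment_le_square:
  fixes h :: "real \<Rightarrow> 'b::real_normed_vector" and F :: "real \<Rightarrow> real"
  assumes X: "0 \<le> X" and F_cont: "continuous_on {0..X} F" and C: "0 \<le> C"
    and F_mono: "\<And>x y. 0 \<le> x \<Longrightarrow> x \<le> y \<Longrightarrow> y \<le> X \<Longrightarrow> F x \<le> F y"
    and h_incr: "\<And>x y. 0 \<le> x \<Longrightarrow> x \<le> y \<Longrightarrow> y \<le> X \<Longrightarrow> norm (h y - h x) \<le> C * (F y - F x)^2"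
  shows "h X = h 0"
proof -
  define D where "D = C * (F X - F 0) + 1"
  have D: "0 < D" using C F_mono[of 0 X] X by (simp add: D_def add_nonneg_pos)
  have "norm (h X - h 0) \<le> 0 + e" if "e > 0" for e
  proof -
    have "norm (h X - h 0) \<le> C * (e / D) * (F X - F 0)"
      using that D by (intro norm_increment_le_if_increment_le_square[OF X F_cont C _ F_mono
        h_incr]) simp
    also have "\<dots> \<le> e" using that D by (simp add: D_def field_simps)
    finally show ?thesis by simp
  qed
  then show ?thesis using field_le_epsilon[of "norm (h X - h 0)" 0] by simp
qed

lemma absolutely_integrable_continuous_mult:
  fixes a g :: "real \<Rightarrow> 'a::{real_normed_field, euclidean_space}"
  assumes "a absolutely_integrable_on {c..d}" "continuous_on {c..d} g"
  shows "(\<lambda>t. g t * a t) absolutely_integrable_on {c..d}"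
    and "(\<lambda>t. a t * g t) absolutely_integrable_on {c..d}"
proof -
  have "bounded (g ` {c..d})"
    using assms(2) by (simp add: compact_continuous_image compact_imp_bounded)
  then show "(\<lambda>t. g t * a t) absolutely_integrable_on {c..d}"
    by (intro absolutely_integrable_bounded_measurable_product[OF bilinear_times
          continuous_imp_measurable_on_sets_lebesgue[OF assms(2)] _ _ assms(1)]) auto
  then show "(\<lambda>t. a t * g t) absolutely_integrable_on {c..d}"
    by (simp add: mult.commute)
qed

lemma continuous_on_indefinite_integral_eq:
  fixes a :: "real \<Rightarrow> 'a::banach"
  assumes "a integrable_on {x..y}" "\<And>t. t \<in> {x..y} \<Longrightarrow> f t = c + integral {x..t} a"
  shows "continuous_on {x..y} f"
proof -
  have "continuous_on {x..y} (\<lambda>t. c + integral {x..t} a)"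
    by (intro continuous_intros indefinite_integral_continuous_1 assms(1))
  then show ?thesis by (rule continuous_on_eq) (simp add: assms(2))
qed

lemma indefinite_integral_diff:
  fixes a :: "real \<Rightarrow> 'a::banach"
  assumes "a integrable_on {x0..y}" "x0 \<le> x" "x \<le> y"
  shows "integral {x0..y} a - integral {x0..x} a = integral {x..y} a"
  using Henstock_Kurzweil_Integration.integral_combine[OF assms(2,3,1)] by (simp add: algebra_simps)

lemma indefinite_integral_rebase:
  fixes a :: "real \<Rightarrow> 'a::banach"
  assumes aI: "a integrable_on {0..X}" and f: "\<And>t. t \<in> {0..X} \<Longrightarrow> f t = f 0 + integral {0..t} a"
    and x: "0 \<le> x" "x \<le> t" "t \<le> X"
  shows "f t = f x + integral {x..t} a"
proof -
  have "a integrable_on {0..t}" using integrable_on_subinterval[OF aI] x by auto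
  then have "f t = f 0 + (integral {0..x} a + integral {x..t} a)"
    using f[of t] x Henstock_Kurzweil_Integration.integral_combine[OF x(1,2), of a] by simp
  also have "\<dots> = f x + integral {x..t} a" using f[of x] x by (simp add: add.assoc)
  finally show ?thesis .
qed

lemma norm_integral_initial_segment_le:
  fixes a :: "real \<Rightarrow> 'a::euclidean_space"
  assumes "a absolutely_integrable_on {x..y}" "t \<in> {x..y}"
  shows "norm (integral {x..t} a) \<le> integral {x..y} (\<lambda>s. norm (a s))"
proof -
  have "a absolutely_integrable_on {x..t}"
    using assms by (auto intro: absolutely_integrable_on_subinterval)
  then have "norm (integral {x..t} a) \<le> integral {x..t} (\<lambda>s. norm (a s))"
    by (intro integral_norm_bound_integral) (auto simp: absolutely_integrable_on_def)
  also have "\<dots> \<le> integral {x..y} (\<lambda>s. norm (a s))"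
    using assms by (intro integral_subset_le)
      (auto simp: absolutely_integrable_on_def intro: integrable_on_subinterval)
  finally show ?thesis .
qed

lemma norm_integral_mult_increment_le:
  fixes a g :: "real \<Rightarrow> 'a::{real_normed_field, euclidean_space}"
  assumes ai: "a absolutely_integrable_on {x..y}" and g_cont: "continuous_on {x..y} g"
    and g_incr: "\<And>t. t \<in> {x..y} \<Longrightarrow> norm (g t - g x) \<le> B"
  shows "(\<lambda>t. a t * (g t - g x)) integrable_on {x..y}"
    and "norm (integral {x..y} (\<lambda>t. a t * (g t - g x))) \<le> integral {x..y} (\<lambda>t. norm (a t)) * B"
proof -
  show I: "(\<lambda>t. a t * (g t - g x)) integrable_on {x..y}"
    by (intro set_lebesgue_integral_eq_integral(1) absolutely_integrable_continuous_mult(2)[OF ai]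
        continuous_intros g_cont)
  have "norm (integral {x..y} (\<lambda>t. a t * (g t - g x))) \<le> integral {x..y} (\<lambda>t. norm (a t) * B)"
    using g_incr ai by (intro integral_norm_bound_integral I integrable_on_mult_left)
      (auto simp: norm_mult absolutely_integrable_on_def intro: mult_left_mono)
  then show "norm (integral {x..y} (\<lambda>t. a t * (g t - g x))) \<le> integral {x..y} (\<lambda>t. norm (a t)) * B"
    by simp
qed

lemma product_increment_error_le:
  fixes a b f g :: "real \<Rightarrow> 'a::{real_normed_field, euclidean_space}"
  assumes xy: "x \<le> y"
    and ai: "a absolutely_integrable_on {x..y}" and bi: "b absolutely_integrable_on {x..y}"
    and f: "\<And>t. t \<in> {x..y} \<Longrightarrow> f t = f x + integral {x..t} a"
    and g: "\<And>t. t \<in> {x..y} \<Longrightarrow> g t = g x + integral {x..t} b"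
  shows "norm (f y * g y - f x * g x - integral {x..y} (\<lambda>t. a t * g t + f t * b t))
           \<le> 3 * integral {x..y} (\<lambda>t. norm (a t)) * integral {x..y} (\<lambda>t. norm (b t))"
proof -
  define A where "A = integral {x..y} (\<lambda>t. norm (a t))"
  define B where "B = integral {x..y} (\<lambda>t. norm (b t))"
  define E1 where "E1 = integral {x..y} (\<lambda>t. a t * (g t - g x))"
  define E2 where "E2 = integral {x..y} (\<lambda>t. b t * (f t - f x))"
  have aI: "a integrable_on {x..y}" and bI: "b integrable_on {x..y}"
    using ai bi by (simp_all add: absolutely_integrable_on_def)
  have f_incr: "norm (f t - f x) \<le> A" if "t \<in> {x..y}" for t
    using f[OF that] norm_integral_initial_segment_le[OF ai that] by (simp add: A_def)
  have g_incr: "norm (g t - g x) \<le> B" if "t \<in> {x..y}" for t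
    using g[OF that] norm_integral_initial_segment_le[OF bi that] by (simp add: B_def)
  have f_cont: "continuous_on {x..y} f" by (rule continuous_on_indefinite_integral_eq[OF aI f])
  have g_cont: "continuous_on {x..y} g" by (rule continuous_on_indefinite_integral_eq[OF bI g])
  note E1 = norm_integral_mult_increment_le[OF ai g_cont g_incr, folded A_def E1_def]
  note E2 = norm_integral_mult_increment_le[OF bi f_cont f_incr, folded B_def E2_def]
  have "integral {x..y} (\<lambda>t. a t * g t + f t * b t)
        = integral {x..y} (\<lambda>t. (a t * (g t - g x) + a t * g x) + (b t * (f t - f x) + b t * f x))"
    by (simp add: algebra_simps)
  also have "\<dots> = E1 + integral {x..y} a * g x + (E2 + integral {x..y} b * f x)"
    unfolding E1_def E2_def
    by (intro integral_unique has_integral_add has_integral_mult_left integrable_integral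
      E1(1) E2(1) aI bI)
  finally have "f y * g y - f x * g x - integral {x..y} (\<lambda>t. a t * g t + f t * b t)
      = (f y - f x) * (g y - g x) - E1 - E2"
    using f[of y] g[of y] xy by (simp add: algebra_simps)
  also have "norm \<dots> \<le> norm (f y - f x) * norm (g y - g x) + norm E1 + norm E2"
    using norm_triangle_ineq4[of "(f y - f x) * (g y - g x) - E1" E2]
      norm_triangle_ineq4[of "(f y - f x) * (g y - g x)" E1] by (simp add: norm_mult)
  also have "\<dots> \<le> A * B + A * B + B * A"
    using f_incr[of y] g_incr[of y] xy E1(2) E2(2) order_trans[OF norm_ge_zero f_incr[of x]]
    by (intro add_mono mult_mono) auto
  finally show ?thesis by (simp add: A_def B_def)
qed

lemma product_increment_le_square:
  fixes a b f g :: "real \<Rightarrow> 'a::{real_normed_field, euclidean_space}"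
  defines "S \<equiv> \<lambda>t. a t * g t + f t * b t" and "N \<equiv> \<lambda>t. norm (a t) + norm (b t)"
  assumes ai: "a absolutely_integrable_on {0..X}" and bi: "b absolutely_integrable_on {0..X}"
    and f: "\<And>x. x \<in> {0..X} \<Longrightarrow> f x = f 0 + integral {0..x} a"
    and g: "\<And>x. x \<in> {0..X} \<Longrightarrow> g x = g 0 + integral {0..x} b"
    and SI: "S integrable_on {0..X}" and xy: "0 \<le> x" "x \<le> y" "y \<le> X"
  shows "norm ((f y * g y - integral {0..y} S) - (f x * g x - integral {0..x} S))
    \<le> 3 * (integral {0..y} N - integral {0..x} N)^2"
proof -
  define A where "A = integral {x..y} (\<lambda>t. norm (a t))"
  define B where "B = integral {x..y} (\<lambda>t. norm (b t))"
  have ai': "a absolutely_integrable_on {x..y}" and bi': "b absolutely_integrable_on {x..y}"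
    using ai bi xy by (auto intro: absolutely_integrable_on_subinterval)
  have "a absolutely_integrable_on {0..y}" "b absolutely_integrable_on {0..y}"
    using ai bi xy by (auto intro: absolutely_integrable_on_subinterval)
  then have NI: "N integrable_on {0..y}"
    unfolding N_def by (intro integrable_add) (auto simp: absolutely_integrable_on_def)
  have "norm ((f y * g y - integral {0..y} S) - (f x * g x - integral {0..x} S))
      = norm (f y * g y - f x * g x - integral {x..y} S)"
    using indefinite_integral_diff[OF integrable_on_subinterval[OF SI] xy(1,2)] xy
      by (simp add: algebra_simps)
  also have "\<dots> \<le> 3 * A * B"
    unfolding S_def A_def B_def using xy ai bi
    by (intro product_increment_error_le ai' bi' indefinite_integral_rebase[OF _ f]
        indefinite_integral_rebase[OF _ g]) (auto simp: absolutely_integrable_on_def)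
  also have "\<dots> \<le> 3 * (A + B)^2"
    using zero_le_power2[of "A + B"] zero_le_power2[of A] zero_le_power2[of B]
    unfolding power2_sum mult.assoc distrib_left by linarith
  also have "A + B = integral {0..y} N - integral {0..x} N"
    using indefinite_integral_diff[OF NI xy(1,2)] ai' bi'
    by (simp add: A_def B_def N_def integral_add absolutely_integrable_on_def)
  finally show ?thesis .
qed

lemma integral_product_rule:
  fixes a b f g :: "real \<Rightarrow> 'a::{real_normed_field, euclidean_space}"
  assumes X: "0 \<le> X"
    and ai: "a absolutely_integrable_on {0..X}" and bi: "b absolutely_integrable_on {0..X}"
    and f: "\<And>x. x \<in> {0..X} \<Longrightarrow> f x = f 0 + integral {0..x} a"
    and g: "\<And>x. x \<in> {0..X} \<Longrightarrow> g x = g 0 + integral {0..x} b"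
  shows "(\<lambda>t. a t * g t + f t * b t) absolutely_integrable_on {0..X}"
    and "f X * g X = f 0 * g 0 + integral {0..X} (\<lambda>t. a t * g t + f t * b t)"
proof -
  have aI: "a integrable_on {0..X}" and bI: "b integrable_on {0..X}"
    using ai bi by (simp_all add: absolutely_integrable_on_def)
  show S: "(\<lambda>t. a t * g t + f t * b t) absolutely_integrable_on {0..X}"
    using continuous_on_indefinite_integral_eq[OF aI f] continuous_on_indefinite_integral_eq[OF bI g]
    by (intro set_integral_add absolutely_integrable_continuous_mult ai bi)
  define F where "F x = integral {0..x} (\<lambda>t. norm (a t) + norm (b t))" for x
  have NI: "(\<lambda>t. norm (a t) + norm (b t)) integrable_on {0..X}"
    using ai bi by (intro integrable_add) (auto simp: absolutely_integrable_on_def)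
  have F_mono: "F x \<le> F y" if "0 \<le> x" "x \<le> y" "y \<le> X" for x y
    unfolding F_def using that NI by (intro integral_subset_le) (auto intro: integrable_on_subinterval)
  have "f X * g X - integral {0..X} (\<lambda>t. a t * g t + f t * b t)
      = f 0 * g 0 - integral {0..0} (\<lambda>t. a t * g t + f t * b t)"
  proof (rule eq_if_norm_increment_le_square[OF X _ _ F_mono])
    show "continuous_on {0..X} F"
      unfolding F_def by (rule indefinite_integral_continuous_1[OF NI])
    show "norm ((f y * g y - integral {0..y} (\<lambda>t. a t * g t + f t * b t))
        - (f x * g x - integral {0..x} (\<lambda>t. a t * g t + f t * b t))) \<le> 3 * (F y - F x)^2"
      if "0 \<le> x" "x \<le> y" "y \<le> X" for x y
      unfolding F_def using S that
      by (intro product_increment_le_square[OF ai bi f g]) (auto simp: absolutely_integrable_on_def)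
  qed simp
  then show "f X * g X = f 0 * g 0 + integral {0..X} (\<lambda>t. a t * g t + f t * b t)"
    by (simp add: algebra_simps)
qed

lemma integral_mult_indefinite_integral_power:
  fixes a :: "real \<Rightarrow> real"
  assumes x: "0 \<le> x" and ai: "a absolutely_integrable_on {0..x}"
  shows "(\<lambda>t. a t * integral {0..t} a ^ n) integrable_on {0..x}"
    and "integral {0..x} (\<lambda>t. a t * integral {0..t} a ^ n) = integral {0..x} a ^ Suc n / Suc n"
proof -
  define F where "F y = integral {0..y} a" for y
  have F_cont: "continuous_on {0..y} F" if "y \<le> x" for y
    using ai that unfolding F_def
    by (intro indefinite_integral_continuous_1)
      (auto simp: absolutely_integrable_on_def intro: integrable_on_subinterval)
  have ai': "a absolutely_integrable_on {0..y}" if "y \<in> {0..x}" for y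
    using ai that by (auto intro: absolutely_integrable_on_subinterval)
  have power_ai: "(\<lambda>t. a t * F t ^ n) absolutely_integrable_on {0..y}" if "y \<in> {0..x}" for n y
    using that by (intro absolutely_integrable_continuous_mult(2) ai' continuous_intros F_cont) auto
  then show "(\<lambda>t. a t * integral {0..t} a ^ n) integrable_on {0..x}"
    using x by (simp add: F_def[abs_def] absolutely_integrable_on_def)
  have "F y ^ Suc n = integral {0..y} (\<lambda>t. Suc n * (a t * F t ^ n))" if "y \<in> {0..x}" for y
    using that
  proof (induction n arbitrary: y)
    case 0
    then show ?case by (simp add: F_def)
  next
    case (Suc n)
    have "F y * F y ^ Suc n = integral {0..y} (\<lambda>t. a t * F t ^ Suc n + F t * (Suc n * (a t * F t ^ n)))"
      using integral_product_rule(2)[of y a "\<lambda>t. Suc n * (a t * F t ^ n)" F "\<lambda>t. F t ^ Suc n"]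
        Suc ai' power_ai
      by (auto simp: F_def set_integrable_mult_right)
    also have "\<dots> = integral {0..y} (\<lambda>t. Suc (Suc n) * (a t * F t ^ Suc n))"
      by (rule integral_cong) (simp add: algebra_simps)
    finally show ?case by simp
  qed
  from this[of x] x show "integral {0..x} (\<lambda>t. a t * integral {0..t} a ^ n)
    = integral {0..x} a ^ Suc n / Suc n"
    by (simp add: F_def[abs_def] del: of_nat_Suc)
qed

lemma integral_mult_norm_le_power_fact:
  fixes U :: "real \<Rightarrow> 'v::real_normed_vector" and a :: "real \<Rightarrow> real"
  assumes x: "0 \<le> x" and ai: "a absolutely_integrable_on {0..x}"
    and a_nonneg: "\<And>t. t \<in> {0..x} \<Longrightarrow> 0 \<le> a t" and U_cont: "continuous_on {0..x} U"
    and U_le: "\<And>t. t \<in> {0..x} \<Longrightarrow> norm (U t) \<le> C * (integral {0..t} a ^ n / fact n)"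
  shows "(\<lambda>t. a t * norm (U t)) integrable_on {0..x}"
    and "integral {0..x} (\<lambda>t. a t * norm (U t)) \<le> C * (integral {0..x} a ^ Suc n / fact (Suc n))"
proof -
  show I: "(\<lambda>t. a t * norm (U t)) integrable_on {0..x}"
    by (intro set_lebesgue_integral_eq_integral(1) absolutely_integrable_continuous_mult(2)
        ai continuous_intros U_cont)
  have "integral {0..x} (\<lambda>t. a t * norm (U t))
      \<le> integral {0..x} (\<lambda>t. C / fact n * (a t * integral {0..t} a ^ n))"
  proof (rule integral_le[OF I])
    show "(\<lambda>t. C / fact n * (a t * integral {0..t} a ^ n)) integrable_on {0..x}"
      by (intro integrable_on_mult_right integral_mult_indefinite_integral_power(1) x ai)
    show "a t * norm (U t) \<le> C / fact n * (a t * integral {0..t} a ^ n)" if "t \<in> {0..x}" for t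
      using mult_left_mono[OF U_le a_nonneg, OF that that] by (simp add: algebra_simps)
  qed
  also have "\<dots> = C * (integral {0..x} a ^ Suc n / fact (Suc n))"
    using integral_mult_indefinite_integral_power(2)[OF x ai, of n]
    by (simp add: field_simps del: of_nat_Suc)
  finally show "integral {0..x} (\<lambda>t. a t * norm (U t))
    \<le> C * (integral {0..x} a ^ Suc n / fact (Suc n))" .
qed

section \<open>Linear Volterra equations\<close>

lemma summable_exp_tail: "summable (\<lambda>k. c * (y ^ Suc k / fact (Suc k)))" for c y :: real
proof -
  have "summable (\<lambda>k. y ^ k / fact k)" using summable_exp[of y] by (simp add: field_simps)
  then show ?thesis by (subst (asm) summable_Suc_iff[symmetric]) (rule summable_mult)
qed

lemma volterra_inequality_imp_zero:
  fixes U :: "real \<Rightarrow> 'v::real_normed_vector" and a :: "real \<Rightarrow> real"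
  assumes X: "0 \<le> X" and ai: "a absolutely_integrable_on {0..X}"
    and a_nonneg: "\<And>t. t \<in> {0..X} \<Longrightarrow> 0 \<le> a t"
    and U_cont: "continuous_on {0..X} U"
    and U_le: "\<And>x. x \<in> {0..X} \<Longrightarrow> norm (U x) \<le> integral {0..x} (\<lambda>t. a t * norm (U t))"
  shows "U X = 0"
proof -
  obtain C where C: "\<And>x. x \<in> {0..X} \<Longrightarrow> norm (U x) \<le> C"
    using compact_imp_bounded[OF compact_continuous_image[OF U_cont compact_Icc]]
    unfolding bounded_iff by blast
  have U_fact: "norm (U x) \<le> C * (integral {0..x} a ^ n / fact n)" if "x \<in> {0..X}" for n x
    using that
  proof (induction n arbitrary: x)
    case 0
    then show ?case using C by simp
  next
    case (Suc n)
    then have "norm (U x) \<le> integral {0..x} (\<lambda>t. a t * norm (U t))" using U_le by blast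
    also have "\<dots> \<le> C * (integral {0..x} a ^ Suc n / fact (Suc n))"
      using Suc ai a_nonneg continuous_on_subset[OF U_cont]
      by (intro integral_mult_norm_le_power_fact absolutely_integrable_on_subinterval[OF ai]) auto
    finally show ?case .
  qed
  have "(\<lambda>n. C * (integral {0..X} a ^ n / fact n)) \<longlonglongrightarrow> C * 0"
    using summable_LIMSEQ_zero[OF summable_exp[of "integral {0..X} a"]]
    by (intro tendsto_mult_left) (simp add: field_simps)
  then have "norm (U X) \<le> 0"
    by (intro tendsto_lowerbound[of _ _ sequentially]) (use U_fact X in auto)
  then show ?thesis by simp
qed

definition volterra_solution :: "(real \<Rightarrow> 'v \<Rightarrow> 'v::real_normed_vector) \<Rightarrow> 'v \<Rightarrow> (real \<Rightarrow> 'v) \<Rightarrow> bool" where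
  "volterra_solution B M0 M \<longleftrightarrow>
     (\<forall>x\<ge>0. (\<lambda>t. B t (M t)) integrable_on {0..x} \<and> M x = M0 + integral {0..x} (\<lambda>t. B t (M t)))"

lemma volterra_solution_initial: "volterra_solution B M0 M \<Longrightarrow> M 0 = M0"
  unfolding volterra_solution_def by force

lemma volterra_solution_continuous:
  fixes M :: "real \<Rightarrow> 'v::banach"
  shows "volterra_solution B M0 M \<Longrightarrow> 0 \<le> x \<Longrightarrow> continuous_on {0..x} M"
  unfolding volterra_solution_def
    by (intro continuous_on_indefinite_integral_eq[of "\<lambda>t. B t (M t)" 0 x _ M0]) auto

text \<open>The hypothesis \<open>integrable_continuous\<close> stands in for measurability of the kernel \<open>B\<close>.\<close>
locale linear_volterra =
  fixes B :: "real \<Rightarrow> 'v::euclidean_space \<Rightarrow> 'v" and a :: "real \<Rightarrow> real"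
  assumes linear: "\<And>t. linear (B t)"
    and norm_le: "\<And>t v. 0 \<le> t \<Longrightarrow> norm (B t v) \<le> a t * norm v"
    and a_ai: "\<And>x. 0 \<le> x \<Longrightarrow> a absolutely_integrable_on {0..x}"
    and a_nonneg: "\<And>t. 0 \<le> t \<Longrightarrow> 0 \<le> a t"
    and integrable_continuous:
      "\<And>M x. 0 \<le> x \<Longrightarrow> continuous_on {0..x} M \<Longrightarrow> (\<lambda>t. B t (M t)) integrable_on {0..x}"
begin

lemma volterra_solution_unique:
  assumes M: "volterra_solution B M0 M" and N: "volterra_solution B M0 N" and x: "0 \<le> x"
  shows "M x = N x"
proof -
  define U where "U t = M t - N t" for t
  have "U x = 0"
  proof (rule volterra_inequality_imp_zero[OF x a_ai[OF x]])
    show "continuous_on {0..x} U"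
      unfolding U_def using volterra_solution_continuous[OF M x] volterra_solution_continuous[OF N x]
      by (intro continuous_intros)
    fix y assume y: "y \<in> {0..x}"
    have MI: "(\<lambda>t. B t (M t)) integrable_on {0..y}" and NI: "(\<lambda>t. B t (N t)) integrable_on {0..y}"
      using M N y by (auto simp: volterra_solution_def)
    have "U y = integral {0..y} (\<lambda>t. B t (U t))"
      using M N y by (simp add: volterra_solution_def U_def
        integral_diff[OF MI NI, symmetric] linear_diff[OF linear])
    also have "norm \<dots> \<le> integral {0..y} (\<lambda>t. a t * norm (U t))"
    proof (rule integral_norm_bound_integral)
      show "(\<lambda>t. B t (U t)) integrable_on {0..y}"
        using integrable_diff[OF MI NI] by (simp add: U_def linear_diff[OF linear])
      show "(\<lambda>t. a t * norm (U t)) integrable_on {0..y}"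
        unfolding U_def using y volterra_solution_continuous[OF M, of y]
          volterra_solution_continuous[OF N, of y]
        by (intro set_lebesgue_integral_eq_integral(1) absolutely_integrable_continuous_mult(2) a_ai
            continuous_intros) auto
    qed (use norm_le y in auto)
    finally show "norm (U y) \<le> integral {0..y} (\<lambda>t. a t * norm (U t))" .
  qed (use a_nonneg in auto)
  then show ?thesis by (simp add: U_def)
qed

primrec picard :: "'v \<Rightarrow> nat \<Rightarrow> real \<Rightarrow> 'v" where
  "picard M0 0 = (\<lambda>x. M0)"
| "picard M0 (Suc n) = (\<lambda>x. M0 + integral {0..x} (\<lambda>t. B t (picard M0 n t)))"

lemma picard_continuous: "0 \<le> x \<Longrightarrow> continuous_on {0..x} (picard M0 n)"
  by (induction n) (auto intro!: continuous_intros indefinite_integral_continuous_1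
    integrable_continuous)

lemma picard_integrable: "0 \<le> x \<Longrightarrow> (\<lambda>t. B t (picard M0 n t)) integrable_on {0..x}"
  by (intro integrable_continuous picard_continuous)

lemma picard_step_eq:
  assumes x: "0 \<le> x"
  shows "(\<lambda>t. B t (picard M0 (Suc n) t - picard M0 n t)) integrable_on {0..x}"
    and "picard M0 (Suc (Suc n)) x - picard M0 (Suc n) x
      = integral {0..x} (\<lambda>t. B t (picard M0 (Suc n) t - picard M0 n t))"
proof -
  note I = picard_integrable[OF x, of M0 "Suc n"] picard_integrable[OF x, of M0 n]
  show "(\<lambda>t. B t (picard M0 (Suc n) t - picard M0 n t)) integrable_on {0..x}"
    using integrable_diff[OF I] by (simp add: linear_diff[OF linear] del: picard.simps(2))
  have "picard M0 (Suc (Suc n)) x - picard M0 (Suc n) x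
        = integral {0..x} (\<lambda>t. B t (picard M0 (Suc n) t)) - integral {0..x} (\<lambda>t. B t (picard M0 n t))"
    by simp
  also have "\<dots> = integral {0..x} (\<lambda>t. B t (picard M0 (Suc n) t - picard M0 n t))"
    using integral_diff[OF I] by (simp add: linear_diff[OF linear] del: picard.simps)
  finally show "picard M0 (Suc (Suc n)) x - picard M0 (Suc n) x
      = integral {0..x} (\<lambda>t. B t (picard M0 (Suc n) t - picard M0 n t))" .
qed

lemma picard_step_le:
  assumes "0 \<le> x"
  shows "norm (picard M0 (Suc n) x - picard M0 n x)
    \<le> norm M0 * (integral {0..x} a ^ Suc n / fact (Suc n))"
  using assms
proof (induction n arbitrary: x)
  case 0
  have "norm (integral {0..x} (\<lambda>t. B t M0)) \<le> integral {0..x} (\<lambda>t. a t * norm M0)"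
    using 0 a_ai[OF 0] picard_integrable[OF 0, of M0 0] norm_le
    by (intro integral_norm_bound_integral integrable_on_mult_left)
      (auto simp: absolutely_integrable_on_def)
  then show ?case by (simp add: mult.commute)
next
  case (Suc n)
  define D where "D t = picard M0 (Suc n) t - picard M0 n t" for t
  have x: "0 \<le> x" by fact
  have D_cont: "continuous_on {0..x} D"
    unfolding D_def by (intro continuous_intros picard_continuous x)
  have D_le: "norm (D t) \<le> norm M0 * (integral {0..t} a ^ Suc n / fact (Suc n))" if "t \<in> {0..x}" for t
    using Suc.IH that by (simp add: D_def del: picard.simps)
  have "t \<in> {0..x} \<Longrightarrow> 0 \<le> a t" for t by (simp add: a_nonneg)
  note D_bound = integral_mult_norm_le_power_fact[OF x a_ai[OF x] this D_cont D_le]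
  have "norm (picard M0 (Suc (Suc n)) x - picard M0 (Suc n) x) = norm (integral {0..x} (\<lambda>t. B t (D t)))"
    unfolding D_def picard_step_eq(2)[OF x] ..
  also have "\<dots> \<le> integral {0..x} (\<lambda>t. a t * norm (D t))"
    by (rule integral_norm_bound_integral[OF _ D_bound(1)])
      (use picard_step_eq(1)[OF x] norm_le in \<open>auto simp: D_def\<close>)
  also note D_bound(2)
  finally show ?case .
qed

lemma picard_step_le_uniform:
  assumes "0 \<le> t" "t \<le> x"
  shows "norm (picard M0 (Suc n) t - picard M0 n t)
    \<le> norm M0 * (integral {0..x} a ^ Suc n / fact (Suc n))"
proof -
  have aI: "a integrable_on {0..x}" "a integrable_on {0..t}"
    using assms a_ai[of x] a_ai[of t] by (auto simp: absolutely_integrable_on_def)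
  have "0 \<le> integral {0..t} a"
    by (rule integral_nonneg[OF aI(2)]) (use assms a_nonneg in auto)
  moreover have "integral {0..t} a \<le> integral {0..x} a"
    by (rule integral_subset_le[OF _ aI(2,1)]) (use assms a_nonneg in auto)
  ultimately have "norm M0 * (integral {0..t} a ^ Suc n / fact (Suc n))
    \<le> norm M0 * (integral {0..x} a ^ Suc n / fact (Suc n))"
    by (intro mult_left_mono divide_right_mono power_mono) auto
  with picard_step_le[OF assms(1), of M0 n] show ?thesis by linarith
qed

lemma picard_telescope: "picard M0 n x = M0 + (\<Sum>k<n. picard M0 (Suc k) x - picard M0 k x)"
  using sum_lessThan_telescope[of "\<lambda>k. picard M0 k x" n] by (simp del: picard.simps(2))

definition picard_limit :: "'v \<Rightarrow> real \<Rightarrow> 'v" where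
  "picard_limit M0 x = M0 + (\<Sum>k. picard M0 (Suc k) x - picard M0 k x)"

lemma picard_tendsto:
  assumes "0 \<le> x"
  shows "(\<lambda>n. picard M0 n x) \<longlonglongrightarrow> picard_limit M0 x"
proof -
  have "summable (\<lambda>k. picard M0 (Suc k) x - picard M0 k x)"
    using picard_step_le_uniform[OF assms order_refl, of M0]
    by (intro summable_comparison_test'[OF summable_exp_tail[of "norm M0" "integral {0..x} a"]]) blast
  moreover have "(\<lambda>n. picard M0 n x) = (\<lambda>n. M0 + (\<Sum>k<n. picard M0 (Suc k) x - picard M0 k x))"
    by (rule ext) (rule picard_telescope)
  ultimately show ?thesis
    unfolding picard_limit_def by (simp only:) (intro tendsto_add tendsto_const summable_LIMSEQ)
qed

lemma picard_norm_le:
  assumes "t \<in> {0..x}"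
  shows "norm (picard M0 n t) \<le> norm M0 + (\<Sum>k. norm M0 * (integral {0..x} a ^ Suc k / fact (Suc k)))"
proof -
  have "norm (\<Sum>k<n. picard M0 (Suc k) t - picard M0 k t)
        \<le> (\<Sum>k<n. norm M0 * (integral {0..x} a ^ Suc k / fact (Suc k)))"
  proof (intro order_trans[OF norm_sum] sum_mono)
    show "norm (picard M0 (Suc k) t - picard M0 k t)
      \<le> norm M0 * (integral {0..x} a ^ Suc k / fact (Suc k))"
      for k using assms by (intro picard_step_le_uniform) auto
  qed
  also have "\<dots> \<le> (\<Sum>k. norm M0 * (integral {0..x} a ^ Suc k / fact (Suc k)))"
  proof -
    have "0 \<le> integral {0..x} a"
      using assms a_ai[of x] a_nonneg by (intro integral_nonneg)
        (auto simp: absolutely_integrable_on_def)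
    then show ?thesis by (intro sum_le_suminf summable_exp_tail) auto
  qed
  finally show ?thesis
    unfolding picard_telescope[of M0 n t]
    using norm_triangle_ineq[of M0 "\<Sum>k<n. picard M0 (Suc k) t - picard M0 k t"] by linarith
qed

lemma volterra_solution_picard_limit: "volterra_solution B M0 (picard_limit M0)"
  unfolding volterra_solution_def
proof (intro allI impI)
  fix x :: real
  assume x: "0 \<le> x"
  define C where "C = norm M0 + (\<Sum>k. norm M0 * (integral {0..x} a ^ Suc k / fact (Suc k)))"
  have dominated: "norm (B t (picard M0 n t)) \<le> a t * C" if "t \<in> {0..x}" for n t
  proof -
    have "norm (B t (picard M0 n t)) \<le> a t * norm (picard M0 n t)" using norm_le that by auto
    also have "\<dots> \<le> a t * C"
      using picard_norm_le[OF that, of M0 n] a_nonneg[of t] that by (intro mult_left_mono)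
        (auto simp: C_def)
    finally show ?thesis .
  qed
  have pointwise: "(\<lambda>n. B t (picard M0 n t)) \<longlonglongrightarrow> B t (picard_limit M0 t)" if "t \<in> {0..x}" for t
    using linear_continuous_at[OF linear_conv_bounded_linear[THEN iffD1, OF linear]]
      picard_tendsto[of t] that by (auto intro: isCont_tendsto_compose)
  have majorant: "(\<lambda>t. a t * C) integrable_on {0..x}"
    using a_ai[OF x] by (intro integrable_on_mult_left) (simp add: absolutely_integrable_on_def)
  note dc = dominated_convergence[OF picard_integrable[OF x] majorant dominated pointwise]
  have "(\<lambda>n. picard M0 (Suc n) x) \<longlonglongrightarrow> M0 + integral {0..x} (\<lambda>t. B t (picard_limit M0 t))"
    by (simp del: picard.simps(1)) (intro tendsto_add tendsto_const dc(2))
  moreover have "(\<lambda>n. picard M0 (Suc n) x) \<longlonglongrightarrow> picard_limit M0 x"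
    using LIMSEQ_Suc[OF picard_tendsto[OF x]] .
  ultimately show "(\<lambda>t. B t (picard_limit M0 t)) integrable_on {0..x} \<and>
      picard_limit M0 x = M0 + integral {0..x} (\<lambda>t. B t (picard_limit M0 t))"
    using dc(1) LIMSEQ_unique by blast
qed

end

section \<open>Matrix norms\<close>

lemma norm_vec_square: "(norm x)^2 = (\<Sum>i\<in>UNIV. (norm (x $ i))^2)"
  by (simp add: norm_vec_def L2_set_def sum_nonneg)

lemma norm_le_sum_norm_nth: "norm x \<le> (\<Sum>i\<in>UNIV. norm (x $ i))"
  unfolding norm_vec_def by (rule L2_set_le_sum) simp

lemma norm_matrix_vector_mult_le:
  fixes A :: "'a::real_normed_field^'n^'m"
  shows "norm (A *v x) \<le> norm A * norm x"
proof -
  have row: "norm ((A *v x) $ i) \<le> norm (A $ i) * norm x" for i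
  proof -
    have "norm ((A *v x) $ i) \<le> (\<Sum>j\<in>UNIV. norm (A $ i $ j) * norm (x $ j))"
      unfolding matrix_vector_mult_def by (simp add: norm_mult order_trans[OF norm_sum])
    also have "\<dots> \<le> norm (A $ i) * norm x"
      using L2_set_mult_ineq[of "\<lambda>j. norm (A $ i $ j)" "\<lambda>j. norm (x $ j)" UNIV]
      by (simp add: norm_vec_def)
    finally show ?thesis .
  qed
  have "norm (A *v x) \<le> L2_set (\<lambda>i. norm (A $ i) * norm x) UNIV"
    unfolding norm_vec_def[of "A *v x"] by (rule L2_set_mono) (use row in auto)
  also have "\<dots> = norm A * norm x"
    by (simp add: L2_set_left_distrib norm_vec_def)
  finally show ?thesis .
qed

lemma onorm_matrix_vector_mult_le:
  fixes A :: "'a::real_normed_field^'n^'m"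
  shows "onorm ((*v) A) \<le> norm A"
  by (rule onorm_le) (rule norm_matrix_vector_mult_le)

lemma norm_transpose: "norm (transpose A) = norm (A :: 'a::real_normed_vector^'n^'m)"
proof -
  have "(norm (transpose A))^2 = (\<Sum>i\<in>UNIV. \<Sum>j\<in>UNIV. (norm (A $ j $ i))^2)"
    by (simp add: norm_vec_square transpose_def)
  also have "\<dots> = (norm A)^2"
    by (subst sum.swap) (simp add: norm_vec_square)
  finally have "(norm (transpose A))^2 = (norm A)^2" .
  then show ?thesis by (simp add: power2_eq_iff_nonneg)
qed

lemma norm_matrix_mult_le:
  fixes A :: "'a::real_normed_field^'n^'m"
  shows "norm (A ** B) \<le> norm A * norm B"
proof -
  have row: "(A ** B) $ i = transpose B *v (A $ i)" for i
    by (simp add: vec_eq_iff matrix_matrix_mult_def matrix_vector_mult_def transpose_def mult.commute)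
  have "norm (A ** B) \<le> L2_set (\<lambda>i. norm B * norm (A $ i)) UNIV"
    unfolding norm_vec_def[of "A ** B"] row
    by (rule L2_set_mono) (use norm_matrix_vector_mult_le[of "transpose B"]
      in \<open>auto simp: norm_transpose\<close>)
  also have "\<dots> = norm A * norm B"
    using L2_set_right_distrib[of "norm B" "\<lambda>i. norm (A $ i)" UNIV]
    by (simp add: norm_vec_def[of A] mult.commute)
  finally show ?thesis .
qed

definition cnj_transpose :: "complex^'n^'m \<Rightarrow> complex^'m^'n" where
  "cnj_transpose A = (\<chi> i j. cnj (A $ j $ i))"

lemma norm_cnj_transpose_mult_le: "norm (cnj_transpose A *v y) \<le> onorm ((*v) A) * norm y"
proof -
  define p where "p = cnj_transpose A *v y"
  define q where "q = A *v p"
  have "complex_of_real ((norm p)^2) = (\<Sum>j\<in>UNIV. p $ j * cnj (p $ j))"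
    by (simp only: norm_vec_square of_real_sum complex_norm_square)
  also have "\<dots> = (\<Sum>j\<in>UNIV. \<Sum>i\<in>UNIV. cnj (A $ i $ j) * y $ i * cnj (p $ j))"
    by (simp add: p_def cnj_transpose_def matrix_vector_mult_def sum_distrib_right)
  also have "\<dots> = (\<Sum>i\<in>UNIV. \<Sum>j\<in>UNIV. cnj (A $ i $ j) * y $ i * cnj (p $ j))"
    by (rule sum.swap)
  also have "\<dots> = (\<Sum>i\<in>UNIV. y $ i * cnj (q $ i))"
    by (simp add: q_def matrix_vector_mult_def sum_distrib_left mult_ac)
  finally have "(norm p)^2 = norm (\<Sum>i\<in>UNIV. y $ i * cnj (q $ i))"
    by (metis norm_of_real abs_of_nonneg zero_le_power2)
  also have "\<dots> \<le> (\<Sum>i\<in>UNIV. norm (y $ i) * norm (q $ i))"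
    by (simp add: norm_mult order_trans[OF norm_sum])
  also have "\<dots> \<le> norm y * norm q"
    using L2_set_mult_ineq[of "\<lambda>i. norm (y $ i)" "\<lambda>i. norm (q $ i)" UNIV] by (simp add: norm_vec_def)
  also have "\<dots> \<le> norm y * (onorm ((*v) A) * norm p)"
    unfolding q_def by (intro mult_left_mono onorm[OF matrix_vector_mul_bounded_linear]) simp
  finally have "norm p * norm p \<le> norm p * (onorm ((*v) A) * norm y)"
    by (simp add: power2_eq_square algebra_simps)
  then show ?thesis
    using onorm_pos_le[OF matrix_vector_mul_bounded_linear, of A]
    by (cases "norm p = 0") (auto simp: p_def)
qed

lemma integrable_on_vec:
  fixes f :: "real \<Rightarrow> 'a::euclidean_space^'n"
  assumes "\<And>i. (\<lambda>t. f t $ i) integrable_on S"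
  shows "f integrable_on S"
proof -
  have "linear (\<lambda>x::'a. axis i x :: 'a^'n)" for i
    by (rule linearI) (auto simp: axis_def vec_eq_iff)
  then have "(\<lambda>t. \<Sum>i\<in>UNIV. axis i (f t $ i)) integrable_on S"
    using integrable_linear[OF assms] by (intro integrable_sum)
      (auto simp: o_def linear_conv_bounded_linear)
  moreover have "(\<Sum>i\<in>UNIV. axis i (f t $ i)) = f t" for t
    by (simp add: vec_eq_iff axis_def if_distrib sum.delta' cong: if_cong)
  ultimately show ?thesis by simp
qed

lemma linear_matrix_mult_left: "linear (\<lambda>M::'a::real_algebra_1^'n^'m. A ** M)"
  by (rule linearI) (simp_all add: vec_eq_iff matrix_matrix_mult_def scaleR_sum_right
    distrib_left sum.distrib)

lemma bounded_linear_matrix_vector_mult_right: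
  "bounded_linear (\<lambda>A::'a::{real_normed_field, euclidean_space}^'n^'m. A *v c)"
proof -
  have "linear (\<lambda>A::'a^'n^'m. A *v c)"
    by (rule linearI) (simp_all add: vec_eq_iff matrix_vector_mult_def scaleR_sum_right
      distrib_right sum.distrib)
  then show ?thesis by (simp add: linear_conv_bounded_linear)
qed

section \<open>The Dirac system\<close>

lemma dirac_coeff_nth [simp]:
  "dirac_coeff \<phi> z t $ 1 $ 1 = - \<i> * z" "dirac_coeff \<phi> z t $ 1 $ 2 = \<i> * \<phi> t"
  "dirac_coeff \<phi> z t $ 2 $ 1 = - \<i> * cnj (\<phi> t)" "dirac_coeff \<phi> z t $ 2 $ 2 = \<i> * z"
  by (simp_all add: dirac_coeff_def)

lemma matrix_vector_mult_2: "(A *v u) $ i = A $ i $ 1 * u $ 1 + A $ i $ 2 * u $ 2"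
  for A :: "'a::comm_semiring_1^2^2"
  by (simp add: matrix_vector_mult_def sum_2)

lemma matrix_matrix_mult_2: "(A ** B) $ i $ j = A $ i $ 1 * B $ 1 $ j + A $ i $ 2 * B $ 2 $ j"
  for A :: "'a::comm_semiring_1^2^2"
  by (simp add: matrix_matrix_mult_def sum_2)

lemma norm_vec_2: "norm v = sqrt ((norm (v $ 1))^2 + (norm (v $ 2))^2)"
  for v :: "'a::real_normed_vector^2"
  by (simp add: norm_vec_def L2_set_def sum_2)

lemma norm_dirac_coeff_le: "norm (dirac_coeff \<phi> z t) \<le> 2 * (norm z + norm (\<phi> t))"
proof -
  have "norm (dirac_coeff \<phi> z t) \<le> (\<Sum>i\<in>UNIV. \<Sum>j\<in>UNIV. norm (dirac_coeff \<phi> z t $ i $ j))"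
    by (rule order_trans[OF norm_le_sum_norm_nth sum_mono[OF norm_le_sum_norm_nth]])
  then show ?thesis by (simp add: sum_2 norm_mult)
qed

locale dirac_potential =
  fixes \<phi> :: "real \<Rightarrow> complex"
  assumes locally_absolutely_integrable: "\<And>x. x \<ge> 0 \<Longrightarrow> \<phi> absolutely_integrable_on {0..x}"
begin

lemma dirac_coeff_nth_absolutely_integrable:
  assumes x: "0 \<le> x"
  shows "(\<lambda>t. dirac_coeff \<phi> z t $ i $ j) absolutely_integrable_on {0..x}"
proof -
  have const: "(\<lambda>t. c) absolutely_integrable_on {0..x}" for c :: complex
    by (rule absolutely_integrable_continuous_real) simp
  have "(\<lambda>t. c * \<phi> t) absolutely_integrable_on {0..x}" for c
    using absolutely_integrable_continuous_mult(1)[OF locally_absolutely_integrable[OF x], of "\<lambda>t. c"]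
    by simp
  moreover have "(\<lambda>t. c * cnj (\<phi> t)) absolutely_integrable_on {0..x}" for c
    using absolutely_integrable_continuous_mult(1)[OF
        absolutely_integrable_linear[OF locally_absolutely_integrable[OF x]
          bounded_linear_cnj], of "\<lambda>t. c"]
    by (simp add: o_def)
  ultimately show ?thesis
    using const exhaust_2[of i] exhaust_2[of j] by (auto simp only: dirac_coeff_nth)
qed

lemma dirac_bound_absolutely_integrable:
  "0 \<le> x \<Longrightarrow> (\<lambda>t. 2 * (norm z + norm (\<phi> t))) absolutely_integrable_on {0..x}"
  using locally_absolutely_integrable[of x]
  by (intro nonnegative_absolutely_integrable_1 integrable_on_mult_right integrable_add)
    (auto simp: absolutely_integrable_on_def)

lemma dirac_matrix_volterra:
  "linear_volterra (\<lambda>t M. dirac_coeff \<phi> z t ** M) (\<lambda>t. 2 * (norm z + norm (\<phi> t)))"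
proof (rule linear_volterra.intro)
  show "norm (dirac_coeff \<phi> z t ** v) \<le> 2 * (norm z + norm (\<phi> t)) * norm v" for t v
    using norm_matrix_mult_le[of "dirac_coeff \<phi> z t" v] norm_dirac_coeff_le[of \<phi> z t]
    by (meson mult_right_mono norm_ge_zero order_trans)
  show "(\<lambda>t. dirac_coeff \<phi> z t ** M t) integrable_on {0..x}"
    if x: "0 \<le> x" and M: "continuous_on {0..x} M" for M x
  proof (intro integrable_on_vec)
    fix i j
    show "(\<lambda>t. (dirac_coeff \<phi> z t ** M t) $ i $ j) integrable_on {0..x}"
      unfolding matrix_matrix_mult_2
      by (intro integrable_add set_lebesgue_integral_eq_integral(1)
        absolutely_integrable_continuous_mult(2)
          dirac_coeff_nth_absolutely_integrable x continuous_intros M)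
  qed
qed (use dirac_bound_absolutely_integrable in \<open>auto intro: linear_matrix_mult_left\<close>)

lemma dirac_msol_iff_volterra_solution:
  "dirac_msol \<phi> z M \<longleftrightarrow> volterra_solution (\<lambda>t M. dirac_coeff \<phi> z t ** M) (M 0) M"
  by (simp add: dirac_msol_def volterra_solution_def)

lemma dirac_msol_continuous: "dirac_msol \<phi> z M \<Longrightarrow> 0 \<le> x \<Longrightarrow> continuous_on {0..x} M"
  unfolding dirac_msol_iff_volterra_solution by (rule volterra_solution_continuous)

lemma dirac_msol_unique:
  assumes "dirac_msol \<phi> z M" "dirac_msol \<phi> z N" "M 0 = N 0" "0 \<le> x"
  shows "M x = N x"
proof (rule linear_volterra.volterra_solution_unique[OF dirac_matrix_volterra])
  show "volterra_solution (\<lambda>t M. dirac_coeff \<phi> z t ** M) (M 0) M"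
    "volterra_solution (\<lambda>t M. dirac_coeff \<phi> z t ** M) (M 0) N"
    using assms(1-3) unfolding dirac_msol_iff_volterra_solution by simp_all
qed (rule assms(4))

lemma dirac_msol_exists: "\<exists>M. dirac_msol \<phi> z M \<and> M 0 = M0"
proof -
  interpret linear_volterra "\<lambda>t M. dirac_coeff \<phi> z t ** M" "\<lambda>t. 2 * (norm z + norm (\<phi> t))"
    by (rule dirac_matrix_volterra)
  have "volterra_solution (\<lambda>t M. dirac_coeff \<phi> z t ** M) M0 (picard_limit M0)"
    by (rule volterra_solution_picard_limit)
  then show ?thesis
    using volterra_solution_initial unfolding dirac_msol_iff_volterra_solution by metis
qed

lemma transfer_eq:
  assumes M: "dirac_msol \<phi> (complex_of_real lam) M" "M 0 = mat 1" and x: "0 \<le> x"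
  shows "transfer \<phi> lam x = M x"
  unfolding transfer_def
proof (rule the_equality)
  show "\<exists>N. dirac_msol \<phi> (complex_of_real lam) N \<and> N 0 = mat 1 \<and> N x = M x"
    using M by blast
  show "P = M x" if "\<exists>N. dirac_msol \<phi> (complex_of_real lam) N \<and> N 0 = mat 1 \<and> N x = P" for P
    using that dirac_msol_unique[OF _ M(1) _ x] M(2) by auto
qed

lemma dirac_sol_iff_volterra_solution:
  "dirac_sol \<phi> z u \<longleftrightarrow> volterra_solution (\<lambda>t v. dirac_coeff \<phi> z t *v v) (u 0) u"
  by (simp add: dirac_sol_def volterra_solution_def)

lemma dirac_sol_continuous: "dirac_sol \<phi> z u \<Longrightarrow> 0 \<le> x \<Longrightarrow> continuous_on {0..x} u"
  unfolding dirac_sol_iff_volterra_solution by (rule volterra_solution_continuous)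

lemma dirac_sol_nth:
  assumes u: "dirac_sol \<phi> z u" and x: "0 \<le> x"
  shows "u x $ k = u 0 $ k + integral {0..x} (\<lambda>t. (dirac_coeff \<phi> z t *v u t) $ k)"
proof -
  have I: "(\<lambda>t. dirac_coeff \<phi> z t *v u t) integrable_on {0..x}"
    and E: "u x = u 0 + integral {0..x} (\<lambda>t. dirac_coeff \<phi> z t *v u t)"
    using u x unfolding dirac_sol_def by blast+
  show ?thesis
    using E integral_linear[OF I bounded_linear_vec_nth[of k]] by (simp add: o_def)
qed

lemma dirac_sol_rhs_nth_absolutely_integrable:
  assumes u: "dirac_sol \<phi> z u" and x: "0 \<le> x"
  shows "(\<lambda>t. (dirac_coeff \<phi> z t *v u t) $ k) absolutely_integrable_on {0..x}"
  unfolding matrix_vector_mult_2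
  by (intro set_integral_add absolutely_integrable_continuous_mult(2)
    dirac_coeff_nth_absolutely_integrable x
      continuous_intros dirac_sol_continuous[OF u x])

lemma dirac_sol_lagrange_identity:
  assumes u: "dirac_sol \<phi> z u" and v: "dirac_sol \<phi> z' v" and x: "0 \<le> x"
  shows "cnj (v x $ 1) * u x $ 1 - cnj (v x $ 2) * u x $ 2 =
         cnj (v 0 $ 1) * u 0 $ 1 - cnj (v 0 $ 2) * u 0 $ 2 +
         \<i> * (cnj z' - z) * integral {0..x} (\<lambda>t. cnj (v t $ 1) * u t $ 1 + cnj (v t $ 2) * u t $ 2)"
proof -
  define I where "I k t = cnj ((dirac_coeff \<phi> z' t *v v t) $ k) * u t $ k
    + cnj (v t $ k) * (dirac_coeff \<phi> z t *v u t) $ k" for k t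
  have product_rule: "I k integrable_on {0..x}
    \<and> cnj (v x $ k) * u x $ k = cnj (v 0 $ k) * u 0 $ k + integral {0..x} (I k)"
    for k
  proof -
    have a: "(\<lambda>t. cnj ((dirac_coeff \<phi> z' t *v v t) $ k)) absolutely_integrable_on {0..x}"
      using absolutely_integrable_linear[OF dirac_sol_rhs_nth_absolutely_integrable[OF v x]
        bounded_linear_cnj]
      by (simp add: o_def)
    have f: "cnj (v y $ k) = cnj (v 0 $ k) + integral {0..y} (\<lambda>t. cnj ((dirac_coeff \<phi> z' t *v v t) $ k))"
      if "y \<in> {0..x}" for y
      using dirac_sol_nth[OF v, of y k] that by (simp add: integral_cnj)
    have g: "u y $ k = u 0 $ k + integral {0..y} (\<lambda>t. (dirac_coeff \<phi> z t *v u t) $ k)"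
      if "y \<in> {0..x}" for y
      using dirac_sol_nth[OF u, of y k] that by simp
    show ?thesis
      using integral_product_rule[OF x a dirac_sol_rhs_nth_absolutely_integrable[OF u x] f g]
      by (simp add: I_def[abs_def] absolutely_integrable_on_def)
  qed
  have "I 1 t - I 2 t = \<i> * (cnj z' - z) * (cnj (v t $ 1) * u t $ 1 + cnj (v t $ 2) * u t $ 2)" for t
    unfolding I_def matrix_vector_mult_2 by (simp add: algebra_simps)
  then have "integral {0..x} (I 1) - integral {0..x} (I 2)
      = \<i> * (cnj z' - z) * integral {0..x} (\<lambda>t. cnj (v t $ 1) * u t $ 1 + cnj (v t $ 2) * u t $ 2)"
    using integral_diff[of "I 1" "{0..x}" "I 2"] product_rule by simp
  then show ?thesis using product_rule[of 1] product_rule[of 2] by (simp add: algebra_simps)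
qed

lemma dirac_sol_norm_identity:
  assumes u: "dirac_sol \<phi> z u" and x: "0 \<le> x"
  shows "(norm (u x $ 1))^2 - (norm (u x $ 2))^2 =
         (norm (u 0 $ 1))^2 - (norm (u 0 $ 2))^2 + 2 * Im z * integral {0..x} (\<lambda>t. (norm (u t))^2)"
proof -
  have cnj_mult: "cnj c * c = complex_of_real ((norm c)^2)" for c :: complex
    by (metis complex_norm_square mult.commute)
  have I: "(\<lambda>t. (norm (u t))^2) integrable_on {0..x}"
    by (intro integrable_continuous_real continuous_intros dirac_sol_continuous[OF u x])
  have of_real_integral: "integral {0..x} (\<lambda>t. complex_of_real ((norm (u t))^2))
      = complex_of_real (integral {0..x} (\<lambda>t. (norm (u t))^2))"
    using integral_linear[OF I bounded_linear_of_real] by (simp add: o_def del: of_real_power)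
  have Im: "\<i> * (cnj z - z) = complex_of_real (2 * Im z)"
    by (simp add: complex_eq_iff)
  have "complex_of_real ((norm (u x $ 1))^2 - (norm (u x $ 2))^2) =
      complex_of_real ((norm (u 0 $ 1))^2 - (norm (u 0 $ 2))^2) + complex_of_real (2 * Im z) *
        integral {0..x} (\<lambda>t. complex_of_real ((norm (u t))^2))"
    using dirac_sol_lagrange_identity[OF u u x] unfolding cnj_mult Im norm_vec_square sum_2 by simp
  also have "\<dots> = complex_of_real ((norm (u 0 $ 1))^2 - (norm (u 0 $ 2))^2
      + 2 * Im z * integral {0..x} (\<lambda>t. (norm (u t))^2))"
    unfolding of_real_integral by simp
  finally show ?thesis by (simp only: of_real_eq_iff)
qed

lemma dirac_sol_msol_mult:
  assumes M: "dirac_msol \<phi> z M"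
  shows "dirac_sol \<phi> z (\<lambda>x. M x *v c)"
  unfolding dirac_sol_def
proof (intro allI impI conjI)
  fix x :: real
  assume x: "0 \<le> x"
  have I: "(\<lambda>t. dirac_coeff \<phi> z t ** M t) integrable_on {0..x}"
    and E: "M x = M 0 + integral {0..x} (\<lambda>t. dirac_coeff \<phi> z t ** M t)"
    using M x unfolding dirac_msol_def by blast+
  show "(\<lambda>t. dirac_coeff \<phi> z t *v (M t *v c)) integrable_on {0..x}"
    using integrable_linear[OF I bounded_linear_matrix_vector_mult_right]
    by (simp add: o_def matrix_vector_mul_assoc)
  show "M x *v c = M 0 *v c + integral {0..x} (\<lambda>t. dirac_coeff \<phi> z t *v (M t *v c))"
    using E integral_linear[OF I bounded_linear_matrix_vector_mult_right]
    by (simp add: o_def matrix_vector_mul_assoc matrix_vector_mult_add_rdistrib)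
qed

lemma dirac_sol_diff:
  assumes u: "dirac_sol \<phi> z u" and v: "dirac_sol \<phi> z v"
  shows "dirac_sol \<phi> z (\<lambda>x. u x - v x)"
  unfolding dirac_sol_def
proof (intro allI impI conjI)
  fix x :: real
  assume x: "0 \<le> x"
  have I: "(\<lambda>t. dirac_coeff \<phi> z t *v u t) integrable_on {0..x}"
    "(\<lambda>t. dirac_coeff \<phi> z t *v v t) integrable_on {0..x}"
    and E: "u x = u 0 + integral {0..x} (\<lambda>t. dirac_coeff \<phi> z t *v u t)"
    "v x = v 0 + integral {0..x} (\<lambda>t. dirac_coeff \<phi> z t *v v t)"
    using u v x unfolding dirac_sol_def by blast+
  show "(\<lambda>t. dirac_coeff \<phi> z t *v (u t - v t)) integrable_on {0..x}"
    using integrable_diff[OF I] by (simp add: matrix_vector_mult_diff_distrib)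
  show "u x - v x = u 0 - v 0 + integral {0..x} (\<lambda>t. dirac_coeff \<phi> z t *v (u t - v t))"
    using E by (simp add: matrix_vector_mult_diff_distrib integral_diff[OF I])
qed

end

section \<open>The Weyl solution and the Schur function\<close>

lemma integrable_on_atLeast_if_integrals_bounded:
  fixes g :: "real \<Rightarrow> real"
  assumes g_nonneg: "\<And>t. 0 \<le> t \<Longrightarrow> 0 \<le> g t" and gI: "\<And>x. 0 \<le> x \<Longrightarrow> g integrable_on {0..x}"
    and bounded: "\<And>x. 0 \<le> x \<Longrightarrow> integral {0..x} g \<le> C"
  shows "g integrable_on {0..}"
proof -
  define f where "f k t = (if t \<in> {..real k} then g t else 0)" for k :: nat and t
  have fI: "f k integrable_on {0..}" for k
    unfolding f_def integrable_restrict_Int using gI[of "real k"]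
      by (simp add: Int_commute atLeastAtMost_def)
  have f_integral: "integral {0..} (f k) = integral {0..real k} g" for k
    unfolding f_def integral_restrict_Int by (simp add: atLeastAtMost_def Int_commute)
  have "g integrable_on {0..} \<and> (\<lambda>k. integral {0..} (f k)) \<longlonglongrightarrow> integral {0..} g"
  proof (rule monotone_convergence_increasing[OF fI])
    show "f k t \<le> f (Suc k) t" if "t \<in> {0..}" for k t using that g_nonneg by (auto simp: f_def)
    show "(\<lambda>k. f k t) \<longlonglongrightarrow> g t" if "t \<in> {0..}" for t
    proof (rule tendsto_eventually)
      obtain N :: nat where "t \<le> real N" using real_arch_simple by blast
      then show "\<forall>\<^sub>F k in sequentially. f k t = g t"
        by (intro eventually_sequentiallyI[of N]) (auto simp: f_def intro: order_trans)
    qed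
    have "\<bar>integral {0..} (f k)\<bar> \<le> C" for k
      using bounded[of "real k"] integral_nonneg[OF gI[of "real k"]] g_nonneg by (simp add: f_integral)
    then show "bounded (range (\<lambda>k. integral {0..} (f k)))"
      by (auto simp: bounded_iff)
  qed
  then show ?thesis by blast
qed

definition weyl_init :: "complex \<Rightarrow> complex^2" where
  "weyl_init w = (\<chi> i. if i = 1 then w else 1)"

lemma weyl_init_nth [simp]: "weyl_init w $ 1 = w" "weyl_init w $ 2 = 1"
  by (simp_all add: weyl_init_def)

definition weyl_disc :: "(real \<Rightarrow> complex^2^2) \<Rightarrow> real \<Rightarrow> complex set" where
  "weyl_disc M x = {w. norm ((M x *v weyl_init w) $ 1) \<le> norm ((M x *v weyl_init w) $ 2)}"

context dirac_potential
begin

lemma dirac_sol_norm_integrable: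
  "dirac_sol \<phi> z u \<Longrightarrow> 0 \<le> x \<Longrightarrow> (\<lambda>t. norm (u t)) integrable_on {0..x}"
  by (intro integrable_continuous_real continuous_intros dirac_sol_continuous)

lemma dirac_sol_norm_square_integrable:
  "dirac_sol \<phi> z u \<Longrightarrow> 0 \<le> x \<Longrightarrow> (\<lambda>t. (norm (u t))^2) integrable_on {0..x}"
  by (intro integrable_continuous_real continuous_intros dirac_sol_continuous)

lemma dirac_sol_norm_square_integral_nonneg:
  "dirac_sol \<phi> z u \<Longrightarrow> 0 \<le> x \<Longrightarrow> 0 \<le> integral {0..x} (\<lambda>t. (norm (u t))^2)"
  by (intro integral_nonneg dirac_sol_norm_square_integrable) auto

lemma dirac_sol_norm_square_integral_mono:
  "dirac_sol \<phi> z u \<Longrightarrow> 0 \<le> x \<Longrightarrow> x \<le> y \<Longrightarrow>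
    integral {0..x} (\<lambda>t. (norm (u t))^2) \<le> integral {0..y} (\<lambda>t. (norm (u t))^2)"
  by (intro integral_subset_le dirac_sol_norm_square_integrable) auto

lemma dirac_sol_L2_unique:
  assumes z: "0 < Im z"
    and u: "dirac_sol \<phi> z u" "(\<lambda>x. (norm (u x))\<^sup>2) integrable_on {0..}" "u 0 = weyl_init w"
    and v: "dirac_sol \<phi> z v" "(\<lambda>x. (norm (v x))\<^sup>2) integrable_on {0..}" "v 0 = weyl_init w'"
  shows "w = w'"
proof (rule ccontr)
  assume "w \<noteq> w'"
  define \<delta> where "\<delta> = (norm (w - w'))^2"
  have \<delta>: "\<delta> > 0" using \<open>w \<noteq> w'\<close> by (simp add: \<delta>_def)
  define d where "d x = u x - v x" for x
  have d: "dirac_sol \<phi> z d" unfolding d_def by (rule dirac_sol_diff[OF u(1) v(1)])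
  define h where "h t = 2 * (norm (u t))^2 + 2 * (norm (v t))^2" for t
  have hI: "h integrable_on {0..}"
    unfolding h_def by (intro integrable_add integrable_on_mult_right u(2) v(2))
  have \<delta>_le: "\<delta> \<le> h t" if t: "0 \<le> t" for t
  proof -
    have "\<delta> \<le> (norm (d t $ 1))^2 - (norm (d t $ 2))^2"
      using dirac_sol_norm_identity[OF d t] dirac_sol_norm_square_integral_nonneg[OF d t] z u(3) v(3)
      by (simp add: \<delta>_def d_def)
    also have "\<dots> \<le> (norm (d t))^2" by (simp add: norm_vec_square sum_2)
    also have "\<dots> \<le> (norm (u t) + norm (v t))^2"
      unfolding d_def by (intro power_mono norm_triangle_ineq4) simp
    also have "\<dots> \<le> h t"
      unfolding h_def power2_sum using sum_squares_bound[of "norm (u t)" "norm (v t)"] by linarith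
    finally show ?thesis .
  qed
  have bound: "\<delta> * x \<le> integral {0..} h" if x: "0 \<le> x" for x
  proof -
    have "\<delta> * x = integral {0..x} (\<lambda>t. \<delta>)" using x by simp
    also have "\<dots> \<le> integral {0..x} h"
      using \<delta>_le by (intro integral_le integrable_on_subinterval[OF hI]) auto
    also have "\<dots> \<le> integral {0..} h"
      using \<delta>_le \<delta> by (intro integral_subset_le hI integrable_on_subinterval[OF hI]) force+
    finally show ?thesis .
  qed
  have "\<bar>integral {0..} h\<bar> + \<delta> = \<delta> * (\<bar>integral {0..} h\<bar> / \<delta> + 1)"
    using \<delta> by (simp add: field_simps)
  also have "\<dots> \<le> integral {0..} h"
    using \<delta> by (intro bound) simp
  finally show False
    using \<delta> abs_ge_self[of "integral {0..} h"] by linarith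
qed

lemma weyl_disc_iff:
  assumes M: "dirac_msol \<phi> z M" "M 0 = mat 1" and x: "0 \<le> x"
  shows "w \<in> weyl_disc M x \<longleftrightarrow>
    2 * Im z * integral {0..x} (\<lambda>t. (norm (M t *v weyl_init w))^2) \<le> 1 - (norm w)^2"
proof -
  have "(norm ((M x *v weyl_init w) $ 1))^2 - (norm ((M x *v weyl_init w) $ 2))^2
      = (norm w)^2 - 1 + 2 * Im z * integral {0..x} (\<lambda>t. (norm (M t *v weyl_init w))^2)"
    using dirac_sol_norm_identity[OF dirac_sol_msol_mult[OF M(1)] x] M(2) by simp
  moreover have "w \<in> weyl_disc M x \<longleftrightarrow>
      (norm ((M x *v weyl_init w) $ 1))^2 \<le> (norm ((M x *v weyl_init w) $ 2))^2"
    unfolding weyl_disc_def by (simp add: abs_le_square_iff[symmetric])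
  ultimately show ?thesis by linarith
qed

lemma weyl_disc_nonempty:
  assumes M: "dirac_msol \<phi> z M" "M 0 = mat 1" and z: "0 < Im z" and x: "0 \<le> x"
  shows "weyl_disc M x \<noteq> {}"
proof -
  define e1 :: "complex^2" where "e1 = (\<chi> i. if i = 1 then 1 else 0)"
  have "(norm (M x $ 1 $ 1))^2 - (norm (M x $ 2 $ 1))^2
      = 1 + 2 * Im z * integral {0..x} (\<lambda>t. (norm (M t *v e1))^2)"
    using dirac_sol_norm_identity[OF dirac_sol_msol_mult[OF M(1)] x, of e1] M(2)
    by (simp add: e1_def matrix_vector_mult_2)
  moreover have "0 \<le> 2 * Im z * integral {0..x} (\<lambda>t. (norm (M t *v e1))^2)"
    using dirac_sol_norm_square_integral_nonneg[OF dirac_sol_msol_mult[OF M(1)] x] z by simp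
  ultimately have "1 \<le> (norm (M x $ 1 $ 1))^2"
    using zero_le_power2[of "norm (M x $ 2 $ 1)"] by linarith
  then have "M x $ 1 $ 1 \<noteq> 0" by auto
  then have "(M x *v weyl_init (- M x $ 1 $ 2 / M x $ 1 $ 1)) $ 1 = 0"
    by (simp add: matrix_vector_mult_2 field_simps)
  then have "- M x $ 1 $ 2 / M x $ 1 $ 1 \<in> weyl_disc M x"
    by (simp add: weyl_disc_def)
  then show ?thesis by blast
qed

lemma weyl_disc_norm_le:
  assumes "dirac_msol \<phi> z M" "M 0 = mat 1" "0 < Im z" "0 \<le> x" "w \<in> weyl_disc M x"
  shows "norm w \<le> 1"
proof -
  have "0 \<le> 2 * Im z * integral {0..x} (\<lambda>t. (norm (M t *v weyl_init w))^2)"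
    using dirac_sol_norm_square_integral_nonneg[OF dirac_sol_msol_mult[OF assms(1)] assms(4)]
      assms(3) by simp
  then have "(norm w)^2 \<le> 1^2" using weyl_disc_iff[OF assms(1,2,4)] assms(5) by simp
  then show ?thesis by (rule power2_le_imp_le) simp
qed

lemma weyl_disc_antimono:
  assumes M: "dirac_msol \<phi> z M" "M 0 = mat 1" and z: "0 < Im z" and xy: "0 \<le> x" "x \<le> y"
  shows "weyl_disc M y \<subseteq> weyl_disc M x"
proof
  fix w assume "w \<in> weyl_disc M y"
  then have "2 * Im z * integral {0..y} (\<lambda>t. (norm (M t *v weyl_init w))^2) \<le> 1 - (norm w)^2"
    using weyl_disc_iff[OF M order_trans[OF xy]] by blast
  moreover have "2 * Im z * integral {0..x} (\<lambda>t. (norm (M t *v weyl_init w))^2)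
      \<le> 2 * Im z * integral {0..y} (\<lambda>t. (norm (M t *v weyl_init w))^2)"
    using dirac_sol_norm_square_integral_mono[OF dirac_sol_msol_mult[OF M(1)] xy] z
    by (intro mult_left_mono) auto
  ultimately show "w \<in> weyl_disc M x"
    unfolding weyl_disc_iff[OF M xy(1)] by linarith
qed

lemma compact_weyl_disc:
  assumes "dirac_msol \<phi> z M" "M 0 = mat 1" "0 < Im z" "0 \<le> x"
  shows "compact (weyl_disc M x)"
  unfolding compact_eq_bounded_closed
proof
  show "bounded (weyl_disc M x)"
    using weyl_disc_norm_le[OF assms] by (auto simp: bounded_iff)
  have "weyl_disc M x = {w. norm (M x $ 1 $ 1 * w + M x $ 1 $ 2) \<le> norm (M x $ 2 $ 1 * w + M x $ 2 $ 2)}"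
    by (simp add: weyl_disc_def matrix_vector_mult_2)
  then show "closed (weyl_disc M x)"
    by (simp add: closed_Collect_le continuous_intros)
qed

lemma weyl_limit_point_exists:
  assumes M: "dirac_msol \<phi> z M" "M 0 = mat 1" and z: "0 < Im z"
  shows "\<exists>w. \<forall>x\<ge>0. 2 * Im z * integral {0..x} (\<lambda>t. (norm (M t *v weyl_init w))^2) \<le> 1 - (norm w)^2"
proof -
  have "\<Inter>(range (\<lambda>n. weyl_disc M (real n))) \<noteq> {}"
  proof (rule compact_nest)
    show "compact (weyl_disc M (real n))" "weyl_disc M (real n) \<noteq> {}" for n
      using compact_weyl_disc[OF M z] weyl_disc_nonempty[OF M z] by simp_all
    show "weyl_disc M (real n) \<subseteq> weyl_disc M (real m)" if "m \<le> n" for m n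
      using weyl_disc_antimono[OF M z] that by simp
  qed
  then obtain w where w: "\<And>n. w \<in> weyl_disc M (real n)" by blast
  have "w \<in> weyl_disc M x" if "0 \<le> x" for x
    using w[of "nat \<lceil>x\<rceil>"] weyl_disc_antimono[OF M z that real_nat_ceiling_ge[of x]] by auto
  then show ?thesis using weyl_disc_iff[OF M] by blast
qed

lemma schur_eqI:
  assumes z: "0 < Im z" and \<Psi>: "dirac_sol \<phi> z \<Psi>" "(\<lambda>x. (norm (\<Psi> x))\<^sup>2) integrable_on {0..}"
    "\<Psi> 0 = weyl_init w"
  shows "schur \<phi> z = w"
  unfolding schur_def
proof (rule the_equality)
  show "\<exists>\<Psi>. dirac_sol \<phi> z \<Psi> \<and> (\<lambda>x. (norm (\<Psi> x))\<^sup>2) integrable_on {0..} \<and>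
      \<Psi> 0 = (\<chi> i. if i = 1 then w else 1)"
    using \<Psi> unfolding weyl_init_def by blast
  show "w' = w" if "\<exists>\<Psi>. dirac_sol \<phi> z \<Psi> \<and> (\<lambda>x. (norm (\<Psi> x))\<^sup>2) integrable_on {0..} \<and>
      \<Psi> 0 = (\<chi> i. if i = 1 then w' else 1)" for w'
    using that dirac_sol_L2_unique[OF z _ _ _ \<Psi>] unfolding weyl_init_def by blast
qed

lemma weyl_solution_exists:
  assumes z: "0 < Im z"
  shows "\<exists>\<Psi>. dirac_sol \<phi> z \<Psi> \<and> \<Psi> 0 = weyl_init (schur \<phi> z) \<and>
    (\<forall>x\<ge>0. 2 * Im z * integral {0..x} (\<lambda>t. (norm (\<Psi> t))^2) \<le> 1 - (norm (schur \<phi> z))^2)"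
proof -
  obtain M where M: "dirac_msol \<phi> z M" "M 0 = mat 1" using dirac_msol_exists by blast
  obtain w where w: "\<And>x. 0 \<le> x \<Longrightarrow>
      2 * Im z * integral {0..x} (\<lambda>t. (norm (M t *v weyl_init w))^2) \<le> 1 - (norm w)^2"
    using weyl_limit_point_exists[OF M z] by blast
  define \<Psi> where "\<Psi> x = M x *v weyl_init w" for x
  have \<Psi>: "dirac_sol \<phi> z \<Psi>" "\<Psi> 0 = weyl_init w"
    unfolding \<Psi>_def using dirac_sol_msol_mult[OF M(1)] M(2) by auto
  have "(\<lambda>x. (norm (\<Psi> x))\<^sup>2) integrable_on {0..}"
  proof (rule integrable_on_atLeast_if_integrals_bounded)
    show "integral {0..x} (\<lambda>t. (norm (\<Psi> t))^2) \<le> (1 - (norm w)^2) / (2 * Im z)" if "0 \<le> x" for x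
      using w[OF that] z by (simp add: \<Psi>_def field_simps)
  qed (use dirac_sol_norm_square_integrable[OF \<Psi>(1)] in auto)
  then have "schur \<phi> z = w" by (rule schur_eqI[OF z \<Psi>(1) _ \<Psi>(2)])
  then show ?thesis using \<Psi> w by (auto simp: \<Psi>_def)
qed

end

section \<open>The estimate\<close>

lemma square_integral_le:
  fixes g :: "real \<Rightarrow> real"
  assumes L: "0 < L" and gI: "g integrable_on {0..L}" and g2I: "(\<lambda>t. (g t)^2) integrable_on {0..L}"
  shows "(integral {0..L} g)^2 \<le> L * integral {0..L} (\<lambda>t. (g t)^2)"
proof -
  define G where "G = integral {0..L} g"
  define I where "I = integral {0..L} (\<lambda>t. (g t)^2)"
  define c where "c = G / L"
  have "((\<lambda>t. (g t)^2 - 2 * c * g t + c^2) has_integral I - 2 * c * G + c^2 * L) {0..L}"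
    unfolding I_def G_def using L
    using has_integral_const_real[of "c^2" 0 L]
    by (intro has_integral_add has_integral_diff has_integral_mult_right integrable_integral gI g2I)
      (auto simp: mult.commute)
  moreover have "(g t)^2 - 2 * c * g t + c^2 = (g t - c)^2" for t
    by (simp add: power2_diff)
  ultimately have "((\<lambda>t. (g t - c)^2) has_integral I - 2 * c * G + c^2 * L) {0..L}" by simp
  then have "0 \<le> I - 2 * c * G + c^2 * L" by (rule has_integral_nonneg) simp
  also have "\<dots> = I - G^2 / L" using L by (simp add: c_def power2_eq_square)
  finally have "G^2 / L \<le> I" by simp
  then show ?thesis using L by (simp add: G_def I_def pos_divide_le_eq mult.commute)
qed

text \<open>By Cauchy-Schwarz, \<open>c L \<integral> g \<le> \<surd>(L \<integral> g\<^sup>2) / 2\<close>. Either \<open>a \<le> c \<integral> g\<close>, or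
  \<open>g \<ge> a - c \<integral> g > 0\<close> pointwise and \<open>\<integral> g\<^sup>2 \<ge> L (a - c \<integral> g)\<^sup>2\<close>; both cases give
  \<open>\<surd>(L \<integral> g\<^sup>2) \<ge> 2 L a / 3\<close>.\<close>
lemma integral_square_ge_of_pointwise_bound:
  fixes g :: "real \<Rightarrow> real"
  assumes L: "0 < L" and cL: "c * L = 1/2" and a: "0 \<le> a"
    and gI: "g integrable_on {0..L}" and g2I: "(\<lambda>t. (g t)^2) integrable_on {0..L}"
    and bound: "\<And>x. x \<in> {0..L} \<Longrightarrow> a \<le> g x + c * integral {0..L} g"
  shows "4/9 * L * a^2 \<le> integral {0..L} (\<lambda>t. (g t)^2)"
proof -
  define G where "G = integral {0..L} g"
  define I where "I = integral {0..L} (\<lambda>t. (g t)^2)"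
  define J where "J = sqrt (L * I)"
  have I: "0 \<le> I" unfolding I_def by (rule integral_nonneg[OF g2I]) simp
  have J: "0 \<le> J" "J^2 = L * I" using L I by (simp_all add: J_def)
  have GJ: "G \<le> J"
    unfolding J_def G_def I_def by (rule real_le_rsqrt[OF square_integral_le[OF L gI g2I]])
  have "2/3 * (L * a) \<le> J"
  proof (cases "a - c * G \<le> 0")
    case True
    then have "L * a \<le> L * (c * G)" using L by (intro mult_left_mono) auto
    also have "L * (c * G) = (c * L) * G" by (simp only: ac_simps)
    finally have "L * a \<le> G / 2" using cL by simp
    then show ?thesis using GJ J(1) by linarith
  next
    case False
    have "L * (a - c * G)^2 = integral {0..L} (\<lambda>t. (a - c * G)^2)" using L by simp
    also have "\<dots> \<le> I"
    proof -
      have "(a - c * G)^2 \<le> (g x)^2" if "x \<in> {0..L}" for x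
        using bound[OF that] False by (intro power_mono) (auto simp: G_def)
      then show ?thesis unfolding I_def by (intro integral_le g2I) auto
    qed
    finally have "L * (L * (a - c * G)^2) \<le> L * I" using L by (intro mult_left_mono) auto
    then have "(L * (a - c * G))^2 \<le> J^2" using J(2) by (simp add: power2_eq_square mult_ac)
    then have "L * (a - c * G) \<le> J" using J(1) by (rule power2_le_imp_le)
    moreover have "L * (a - c * G) = L * a - (c * L) * G" by (simp add: algebra_simps)
    ultimately show ?thesis using GJ cL by simp
  qed
  then have "(2/3 * (L * a))^2 \<le> J^2" using L a by (intro power_mono) auto
  moreover have "(2/3 * (L * a))^2 = L * (4/9 * L * a^2)" by (simp add: power2_eq_square)
  ultimately have "L * (4/9 * L * a^2) \<le> L * I" using J(2) by simp
  then show ?thesis using L by (simp add: I_def)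
qed

lemma cayley_ratio_le:
  fixes \<sigma> K :: real
  assumes \<sigma>: "0 \<le> \<sigma>" and K: "0 < K" and h: "4/9 * (1 + \<sigma>^2) / K \<le> 1 - \<sigma>^2"
  shows "\<sigma> < 1" and "(1 + \<sigma>) / (1 - \<sigma>) \<le> 9/2 * K"
proof -
  have "0 < 4/9 * (1 + \<sigma>^2) / K" using K by (simp add: add_pos_nonneg)
  then have pos: "0 < 1 - \<sigma>^2" using h by linarith
  then show \<sigma>1: "\<sigma> < 1"
    using power_less_imp_less_base[of \<sigma> 2 1] by simp
  have "(1 + \<sigma>)^2 \<le> 2 * (1 + \<sigma>^2)"
    using zero_le_power2[of "1 - \<sigma>"] by (simp add: power2_diff power2_sum)
  also have "\<dots> \<le> 9/2 * K * (1 - \<sigma>^2)" using h K by (simp add: field_simps)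
  finally have "(1 + \<sigma>)^2 \<le> 9/2 * K * (1 - \<sigma>^2)" .
  moreover have "(1 + \<sigma>)^2 = (1 + \<sigma>) / (1 - \<sigma>) * (1 - \<sigma>^2)"
    using \<sigma>1 by (simp add: power2_eq_square field_simps)
  ultimately have "(1 + \<sigma>) / (1 - \<sigma>) * (1 - \<sigma>^2) \<le> 9/2 * K * (1 - \<sigma>^2)" by simp
  then show "(1 + \<sigma>) / (1 - \<sigma>) \<le> 9/2 * K" using pos by (rule mult_right_le_imp_le)
qed

lemma norm_cayley_le:
  fixes \<xi> s :: complex
  assumes "norm \<xi> = 1" "norm s < 1"
  shows "norm ((1 + \<xi> * s) / (1 - \<xi> * s)) \<le> (1 + norm s) / (1 - norm s)"
proof -
  have "norm (1 + \<xi> * s) \<le> 1 + norm s"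
    using norm_triangle_ineq[of 1 "\<xi> * s"] assms(1) by (simp add: norm_mult)
  moreover have "1 - norm s \<le> norm (1 - \<xi> * s)"
    using norm_triangle_ineq2[of 1 "\<xi> * s"] assms(1) by (simp add: norm_mult)
  ultimately show ?thesis
    unfolding norm_divide using assms(2) by (intro frac_le) auto
qed

definition sigma3 :: "complex^2^2" where
  "sigma3 = (\<chi> i j. if i \<noteq> j then 0 else if i = 1 then 1 else -1)"

lemma sigma3_mult_nth [simp]: "(sigma3 *v v) $ 1 = v $ 1" "(sigma3 *v v) $ 2 = - v $ 2"
  by (simp_all add: sigma3_def matrix_vector_mult_2)

lemma norm_sigma3_mult [simp]: "norm (sigma3 *v v) = norm v"
  by (simp add: norm_vec_2)

lemma cnj_transpose_mult_2:
  "(cnj_transpose A *v v) $ j = cnj (A $ 1 $ j) * v $ 1 + cnj (A $ 2 $ j) * v $ 2"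
  for A :: "complex^'n^2"
  by (simp add: cnj_transpose_def matrix_vector_mult_def sum_2)

lemma matrix_vector_mult_axis_nth: "(A *v axis j 1) $ i = A $ i $ j"
  for A :: "'a::comm_semiring_1^'n^'m"
  by (simp add: matrix_vector_mult_def axis_def if_distrib sum.delta' cong: if_cong)

context dirac_potential
begin

lemma dirac_msol_lagrange_identity:
  assumes M: "dirac_msol \<phi> z' M" and u: "dirac_sol \<phi> z u" and x: "0 \<le> x"
  shows "cnj_transpose (M x) *v (sigma3 *v u x) = cnj_transpose (M 0) *v (sigma3 *v u 0)
    + (\<i> * (cnj z' - z)) *s integral {0..x} (\<lambda>t. cnj_transpose (M t) *v u t)"
proof -
  have "continuous_on {0..x} (\<lambda>t. cnj_transpose (M t) *v u t)"
    unfolding cnj_transpose_def matrix_vector_mult_def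
    using dirac_msol_continuous[OF M x] dirac_sol_continuous[OF u x] by (intro continuous_intros)
  then have I: "(\<lambda>t. cnj_transpose (M t) *v u t) integrable_on {0..x}"
    by (rule integrable_continuous_real)
  have "(cnj_transpose (M x) *v (sigma3 *v u x)) $ j = (cnj_transpose (M 0) *v (sigma3 *v u 0)) $ j
      + \<i> * (cnj z' - z) * integral {0..x} (\<lambda>t. (cnj_transpose (M t) *v u t) $ j)" for j
    using dirac_sol_lagrange_identity[OF u dirac_sol_msol_mult[OF M, of "axis j 1"] x]
    by (simp add: cnj_transpose_mult_2 matrix_vector_mult_axis_nth)
  moreover have "integral {0..x} (\<lambda>t. (cnj_transpose (M t) *v u t) $ j)
      = integral {0..x} (\<lambda>t. cnj_transpose (M t) *v u t) $ j" for j
    using integral_linear[OF I bounded_linear_vec_nth[of j]] by (simp add: o_def)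
  ultimately show ?thesis by (simp add: vec_eq_iff)
qed

lemma norm_integral_cnj_transpose_mult_le:
  assumes M: "dirac_msol \<phi> z' M" and u: "dirac_sol \<phi> z u" and x: "x \<in> {0..L}"
    and k: "\<And>t. t \<in> {0..L} \<Longrightarrow> onorm ((*v) (M t)) \<le> k"
  shows "norm (integral {0..x} (\<lambda>t. cnj_transpose (M t) *v u t)) \<le> k * integral {0..L} (\<lambda>t. norm (u t))"
proof -
  have k0: "0 \<le> k" using k[of 0] x onorm_pos_le[OF matrix_vector_mul_bounded_linear, of "M 0"] by auto
  have "norm (integral {0..x} (\<lambda>t. cnj_transpose (M t) *v u t)) \<le> integral {0..x} (\<lambda>t. k * norm (u t))"
  proof (rule integral_norm_bound_integral)
    show "(\<lambda>t. cnj_transpose (M t) *v u t) integrable_on {0..x}"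
      unfolding cnj_transpose_def matrix_vector_mult_def using x
      by (intro integrable_continuous_real continuous_intros dirac_sol_continuous[OF u]
          dirac_msol_continuous[OF M]) auto
    show "(\<lambda>t. k * norm (u t)) integrable_on {0..x}"
      using x by (intro integrable_on_mult_right dirac_sol_norm_integrable[OF u]) auto
    show "norm (cnj_transpose (M t) *v u t) \<le> k * norm (u t)" if "t \<in> {0..x}" for t
      using norm_cnj_transpose_mult_le[of "M t" "u t"] k[of t] that x
      by (meson atLeastAtMost_iff mult_right_mono norm_ge_zero order_trans)
  qed
  also have "\<dots> \<le> k * integral {0..L} (\<lambda>t. norm (u t))"
    using x k0 by (simp, intro mult_left_mono integral_subset_le dirac_sol_norm_integrable[OF u]) auto
  finally show ?thesis .
qed

lemma weyl_solution_integral_ge: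
  assumes T: "dirac_msol \<phi> (complex_of_real lam) T" "T 0 = mat 1"
    and \<Psi>: "dirac_sol \<phi> (complex_of_real lam + \<i> * complex_of_real \<epsilon>) \<Psi>" "\<Psi> 0 = weyl_init s"
    and \<epsilon>: "0 < \<epsilon>" and k: "0 < k" "\<And>x. x \<in> {0..1/(2*\<epsilon>)} \<Longrightarrow> onorm ((*v) (T x)) \<le> k"
  shows "4/9 * (1/(2*\<epsilon>)) * ((1 + (norm s)^2) / k^2) \<le> integral {0..1/(2*\<epsilon>)} (\<lambda>t. (norm (\<Psi> t))^2)"
proof -
  define L where "L = 1/(2*\<epsilon>)"
  define W where "W x = cnj_transpose (T x) *v (sigma3 *v \<Psi> x)" for x
  define G where "G = integral {0..L} (\<lambda>t. norm (\<Psi> t))"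
  have L: "0 < L" "\<epsilon> * L = 1/2" using \<epsilon> by (simp_all add: L_def)
  have W_diff: "W x - W 0 = \<epsilon> *\<^sub>R integral {0..x} (\<lambda>t. cnj_transpose (T t) *v \<Psi> t)" if "0 \<le> x" for x
  proof -
    have "W x - W 0 = complex_of_real \<epsilon> *s integral {0..x} (\<lambda>t. cnj_transpose (T t) *v \<Psi> t)"
      using dirac_msol_lagrange_identity[OF T(1) \<Psi>(1) that] by (simp add: W_def algebra_simps)
    then show ?thesis by (simp add: vec_eq_iff) (simp add: scaleR_conv_of_real)
  qed
  have "sqrt (1 + (norm s)^2) / k \<le> norm (\<Psi> x) + \<epsilon> * G" if x: "x \<in> {0..L}" for x
  proof -
    have "sqrt (1 + (norm s)^2) = norm (W 0)"
      by (simp add: W_def T(2) \<Psi>(2) norm_vec_2 cnj_transpose_mult_2 mat_def)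
    also have "\<dots> \<le> norm (W x) + norm (W x - W 0)"
      using norm_triangle_sub[of "W 0" "W x"] by (simp add: norm_minus_commute)
    also have "\<dots> = norm (W x) + \<epsilon> * norm (integral {0..x} (\<lambda>t. cnj_transpose (T t) *v \<Psi> t))"
      using W_diff[of x] x \<epsilon> by simp
    also have "\<dots> \<le> k * norm (\<Psi> x) + \<epsilon> * (k * G)"
    proof (intro add_mono mult_left_mono)
      have "onorm ((*v) (T x)) \<le> k" using k(2) x by (simp add: L_def)
      then show "norm (W x) \<le> k * norm (\<Psi> x)"
        using norm_cnj_transpose_mult_le[of "T x" "sigma3 *v \<Psi> x"] unfolding W_def norm_sigma3_mult
        by (meson mult_right_mono norm_ge_zero order_trans)
      show "norm (integral {0..x} (\<lambda>t. cnj_transpose (T t) *v \<Psi> t)) \<le> k * G"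
        unfolding G_def using k(2) by (intro norm_integral_cnj_transpose_mult_le[OF T(1) \<Psi>(1) x])
          (simp add: L_def)
    qed (use \<epsilon> in simp)
    finally show ?thesis using k(1) by (simp add: divide_le_eq algebra_simps)
  qed
  then have "4/9 * L * (sqrt (1 + (norm s)^2) / k)^2 \<le> integral {0..L} (\<lambda>t. (norm (\<Psi> t))^2)"
    using L k(1) by (intro integral_square_ge_of_pointwise_bound[where c = \<epsilon>])
      (auto simp: G_def intro: dirac_sol_norm_integrable[OF \<Psi>(1)]
        dirac_sol_norm_square_integrable[OF \<Psi>(1)])
  then show ?thesis by (simp add: L_def power_divide)
qed

lemma transfer_onorm_sup:
  fixes lam :: real
  assumes L: "0 \<le> L"
  defines "K \<equiv> (SUP x\<in>{0..L}. (onorm (\<lambda>v. transfer \<phi> lam x *v v))^2)"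
  shows "1 \<le> K" and "\<And>x. x \<in> {0..L} \<Longrightarrow> onorm ((*v) (transfer \<phi> lam x)) \<le> sqrt K"
proof -
  obtain T where T: "dirac_msol \<phi> (complex_of_real lam) T" "T 0 = mat 1"
    using dirac_msol_exists by blast
  obtain C where C: "\<And>x. x \<in> {0..L} \<Longrightarrow> norm (T x) \<le> C"
    using compact_imp_bounded[OF compact_continuous_image[OF dirac_msol_continuous[OF T(1) L]
      compact_Icc]]
    unfolding bounded_iff by blast
  have "bdd_above ((\<lambda>x. (onorm (\<lambda>v. transfer \<phi> lam x *v v))^2) ` {0..L})"
  proof (rule bdd_aboveI2)
    show "(onorm (\<lambda>v. transfer \<phi> lam x *v v))^2 \<le> C^2" if "x \<in> {0..L}" for x
      using onorm_matrix_vector_mult_le[of "T x"] C[OF that] transfer_eq[OF T] that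
        onorm_pos_le[OF matrix_vector_mul_bounded_linear, of "T x"]
      by (intro power_mono) auto
  qed
  then have K_ge: "(onorm (\<lambda>v. transfer \<phi> lam x *v v))^2 \<le> K" if "x \<in> {0..L}" for x
    unfolding K_def using that by (rule cSUP_upper[rotated])
  have "(onorm (\<lambda>v. transfer \<phi> lam 0 *v v))^2 = 1"
    using transfer_eq[OF T order_refl] T(2) by (simp add: onorm_id)
  then show "1 \<le> K" using K_ge[of 0] L by simp
  show "onorm ((*v) (transfer \<phi> lam x)) \<le> sqrt K" if "x \<in> {0..L}" for x
    using K_ge[OF that] by (intro real_le_rsqrt) simp
qed

lemma schur_radius_bound:
  fixes lam \<epsilon> :: real
  assumes eps: "0 < \<epsilon>"
  defines "s \<equiv> schur \<phi> (complex_of_real lam + \<i> * complex_of_real \<epsilon>)"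
    and "K \<equiv> (SUP x\<in>{0..1/(2*\<epsilon>)}. (onorm (\<lambda>v. transfer \<phi> lam x *v v))\<^sup>2)"
  shows "4/9 * (1 + (norm s)^2) / K \<le> 1 - (norm s)^2"
proof -
  define z where "z = complex_of_real lam + \<i> * complex_of_real \<epsilon>"
  define L where "L = 1/(2*\<epsilon>)"
  have L: "0 \<le> L" "2 * \<epsilon> * L = 1" using eps by (simp_all add: L_def)
  obtain \<Psi> where \<Psi>: "dirac_sol \<phi> z \<Psi>" "\<Psi> 0 = weyl_init s"
    and \<Psi>_L2: "2 * \<epsilon> * integral {0..L} (\<lambda>t. (norm (\<Psi> t))^2) \<le> 1 - (norm s)^2"
    using weyl_solution_exists[of z] eps L by (auto simp: z_def s_def)
  obtain T where T: "dirac_msol \<phi> (complex_of_real lam) T" "T 0 = mat 1"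
    using dirac_msol_exists by blast
  note K = transfer_onorm_sup[OF L(1), where lam = lam, unfolded L_def, folded K_def]
  have T_le: "onorm ((*v) (T x)) \<le> sqrt K" if "x \<in> {0..L}" for x
    using K(2)[of x] transfer_eq[OF T, of x] that by (simp add: L_def)
  have "4/9 * (1 + (norm s)^2) / K = (2 * \<epsilon> * L) * (4/9 * ((1 + (norm s)^2) / K))"
    using L(2) by simp
  also have "\<dots> = 2 * \<epsilon> * (4/9 * L * ((1 + (norm s)^2) / K))"
    by (simp only: ac_simps)
  also have "\<dots> \<le> 2 * \<epsilon> * integral {0..L} (\<lambda>t. (norm (\<Psi> t))^2)"
    using weyl_solution_integral_ge[OF T \<Psi>[unfolded z_def] eps, of "sqrt K"] K(1) T_le eps
    by (intro mult_left_mono) (simp_all add: L_def)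
  also have "\<dots> \<le> 1 - (norm s)^2" by (rule \<Psi>_L2)
  finally show ?thesis .
qed

end

theorem lemma3p3:
  fixes \<phi> :: "real \<Rightarrow> complex" and \<xi> :: complex and lam \<epsilon> :: real
  assumes loc: "\<And>x. x \<ge> 0 \<Longrightarrow> \<phi> absolutely_integrable_on {0..x}"
    and unif: "\<exists>C. \<forall>x\<ge>0. integral {x..x+1} (\<lambda>t. norm (\<phi> t)) \<le> C"
    and xi: "norm \<xi> = 1"
    and eps: "\<epsilon> > 0"
  shows "norm ((1 + \<xi> * schur \<phi> (complex_of_real lam + \<i> * complex_of_real \<epsilon>)) /
               (1 - \<xi> * schur \<phi> (complex_of_real lam + \<i> * complex_of_real \<epsilon>)))
         \<le> (3 + sqrt 8) * (SUP x\<in>{0..1/(2*\<epsilon>)}. (onorm (\<lambda>v. transfer \<phi> lam x *v v))\<^sup>2)"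
proof -
  \<comment> \<open>Local integrability suffices.\<close>
  interpret dirac_potential \<phi> using loc by unfold_locales
  define s where "s = schur \<phi> (complex_of_real lam + \<i> * complex_of_real \<epsilon>)"
  define K where "K = (SUP x\<in>{0..1/(2*\<epsilon>)}. (onorm (\<lambda>v. transfer \<phi> lam x *v v))\<^sup>2)"
  have K: "0 < K" using transfer_onorm_sup(1)[of "1/(2*\<epsilon>)" lam] eps by (simp add: K_def)
  note cayley = cayley_ratio_le[OF norm_ge_zero K schur_radius_bound[OF eps, of lam, folded s_def K_def]]
  have "norm ((1 + \<xi> * s) / (1 - \<xi> * s)) \<le> 9/2 * K"
    using norm_cayley_le[OF xi cayley(1)] cayley(2) by linarith
  also have "\<dots> \<le> (3 + sqrt 8) * K"
    using K real_le_rsqrt[of "3/2" 8] by (intro mult_right_mono) (auto simp: power2_eq_square)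
  finally show ?thesis by (simp add: s_def K_def)
qed

end
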